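(* If $D$ is finite and the Fischer space $\Pi(D)$ has at least one line that is not a vanishing set, then $\overline{\mathcal{A}}=\mathcal{A}(D)/\mathcal{V}(D)$ is the direct product of all its minimal ideals. Furthermore, $G$ transitively permutes the minimal ideals of $\overline{\mathcal{A}}$.
   Context: Let $G$ be a group generated by a conjugacy class $D$ of involutions such that for all $d,e\in D$ the order of $de$ is $1$, $2$ or $3$. The Fischer space $\Pi(D)$ has point set $D$ and lines the triples $\{d,e,d^e\}$ with $d,e\in D$ non-commuting. $\mathcal{A}(D)$ is the $\mathbb{F}_2$-vector space of finite subsets of $D$ under symmetric difference (basis $D$), with bilinear product determined by $d*e=d+e+f$ if $\{d,e,f\}$ is a line and $d*e=0$ otherwise; $G$ acts on it by linear extension of conjugation. The bilinear form $\langle\cdot,\cdot\rangle$ is determined by $\langle d,e\rangle=1$ if $d,e$ do not commute and $0$ otherwise; $\mathcal{V}(D)$ is its radical, and a finite subset of $D$ is called vanishing if it lies in $\mathcal{V}(D)$. *)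

theory Defs
  imports "HOL-Algebra.Multiplicative_Group" "HOL-Algebra.Generated_Groups" "HOL-Algebra.FiniteProduct"
begin

definition three_transp :: "('a, 'b) monoid_scheme \<Rightarrow> 'a set \<Rightarrow> bool" where
  "three_transp G D \<longleftrightarrow> group G \<and> D \<subseteq> carrier G
     \<and> (\<exists>d0 \<in> carrier G. D = {inv\<^bsub>G\<^esub> g \<otimes>\<^bsub>G\<^esub> d0 \<otimes>\<^bsub>G\<^esub> g | g. g \<in> carrier G})
     \<and> (\<forall>d \<in> D. d \<noteq> \<one>\<^bsub>G\<^esub> \<and> d \<otimes>\<^bsub>G\<^esub> d = \<one>\<^bsub>G\<^esub>)
     \<and> generate G D = carrier G
     \<and> (\<forall>d \<in> D. \<forall>e \<in> D. group.ord G (d \<otimes>\<^bsub>G\<^esub> e) \<in> {1, 2, 3})"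

definition conjg :: "('a, 'b) monoid_scheme \<Rightarrow> 'a \<Rightarrow> 'a \<Rightarrow> 'a" where
  "conjg G d g = inv\<^bsub>G\<^esub> g \<otimes>\<^bsub>G\<^esub> d \<otimes>\<^bsub>G\<^esub> g"

definition commutes :: "('a, 'b) monoid_scheme \<Rightarrow> 'a \<Rightarrow> 'a \<Rightarrow> bool" where
  "commutes G d e \<longleftrightarrow> d \<otimes>\<^bsub>G\<^esub> e = e \<otimes>\<^bsub>G\<^esub> d"

text \<open>Symmetric difference = addition in the F_2-space of finite subsets of D.\<close>
definition sdiff :: "'a set \<Rightarrow> 'a set \<Rightarrow> 'a set" where
  "sdiff X Y = (X - Y) \<union> (Y - X)"

definition fischer_lines :: "('a, 'b) monoid_scheme \<Rightarrow> 'a set \<Rightarrow> 'a set set" where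
  "fischer_lines G D = {{d, e, conjg G d e} | d e. d \<in> D \<and> e \<in> D \<and> \<not> commutes G d e}"

definition Aalg :: "'a set \<Rightarrow> 'a set set" where
  "Aalg D = {X. finite X \<and> X \<subseteq> D}"

definition bmul :: "('a, 'b) monoid_scheme \<Rightarrow> 'a \<Rightarrow> 'a \<Rightarrow> 'a set" where
  "bmul G d e = (if commutes G d e then {} else sdiff (sdiff {d} {e}) {conjg G d e})"

text \<open>Bilinear extension over F_2: coefficient of f in X*Y is the parity of the
  number of pairs (d,e) in X x Y whose basis product contains f.\<close>
definition amul :: "('a, 'b) monoid_scheme \<Rightarrow> 'a set \<Rightarrow> 'a set \<Rightarrow> 'a set" where
  "amul G X Y = {f. odd (card {(d, e). d \<in> X \<and> e \<in> Y \<and> f \<in> bmul G d e})}"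

text \<open>The bilinear form, with values in F_2 represented as bool (True = 1).\<close>
definition bform :: "('a, 'b) monoid_scheme \<Rightarrow> 'a set \<Rightarrow> 'a set \<Rightarrow> bool" where
  "bform G X Y = odd (card {(d, e). d \<in> X \<and> e \<in> Y \<and> \<not> commutes G d e})"

definition Vrad :: "('a, 'b) monoid_scheme \<Rightarrow> 'a set \<Rightarrow> 'a set set" where
  "Vrad G D = {X \<in> Aalg D. \<forall>Y \<in> Aalg D. \<not> bform G X Y}"

definition qcls :: "('a, 'b) monoid_scheme \<Rightarrow> 'a set \<Rightarrow> 'a set \<Rightarrow> 'a set set" where
  "qcls G D X = {sdiff X v | v. v \<in> Vrad G D}"

definition Abar :: "('a, 'b) monoid_scheme \<Rightarrow> 'a set \<Rightarrow> 'a set set set" where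
  "Abar G D = qcls G D ` Aalg D"

definition qzero :: "('a, 'b) monoid_scheme \<Rightarrow> 'a set \<Rightarrow> 'a set set" where
  "qzero G D = qcls G D {}"

definition qadd :: "'a set set \<Rightarrow> 'a set set \<Rightarrow> 'a set set" where
  "qadd P Q = {sdiff p q | p q. p \<in> P \<and> q \<in> Q}"

definition qmul :: "('a, 'b) monoid_scheme \<Rightarrow> 'a set \<Rightarrow> 'a set set \<Rightarrow> 'a set set \<Rightarrow> 'a set set" where
  "qmul G D P Q = {sdiff (amul G p q) v | p q v. p \<in> P \<and> q \<in> Q \<and> v \<in> Vrad G D}"

text \<open>Additive group of the quotient, as a HOL-Algebra monoid (for finite sums).\<close>
definition Abar_add :: "('a, 'b) monoid_scheme \<Rightarrow> 'a set \<Rightarrow> 'a set set monoid" where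
  "Abar_add G D = \<lparr>carrier = Abar G D, mult = qadd, one = qzero G D\<rparr>"

text \<open>Ideals of the quotient algebra (over F_2 a subspace is a subset containing 0
  and closed under addition).\<close>
definition qideal :: "('a, 'b) monoid_scheme \<Rightarrow> 'a set \<Rightarrow> 'a set set set \<Rightarrow> bool" where
  "qideal G D J \<longleftrightarrow> J \<subseteq> Abar G D \<and> qzero G D \<in> J
     \<and> (\<forall>P \<in> J. \<forall>Q \<in> J. qadd P Q \<in> J)
     \<and> (\<forall>P \<in> J. \<forall>Q \<in> Abar G D. qmul G D P Q \<in> J \<and> qmul G D Q P \<in> J)"

definition min_qideal :: "('a, 'b) monoid_scheme \<Rightarrow> 'a set \<Rightarrow> 'a set set set \<Rightarrow> bool" where
  "min_qideal G D J \<longleftrightarrow> qideal G D J \<and> J \<noteq> {qzero G D}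
     \<and> (\<forall>K. qideal G D K \<and> K \<subseteq> J \<longrightarrow> K = {qzero G D} \<or> K = J)"

definition gact_set :: "('a, 'b) monoid_scheme \<Rightarrow> 'a \<Rightarrow> 'a set \<Rightarrow> 'a set" where
  "gact_set G g X = (\<lambda>d. conjg G d g) ` X"

definition gact_q :: "('a, 'b) monoid_scheme \<Rightarrow> 'a \<Rightarrow> 'a set set \<Rightarrow> 'a set set" where
  "gact_q G g P = gact_set G g ` P"

end

theory Submission
  imports Defs
begin

text \<open>
  Write A for A(D)/V(D). It is a commutative algebra of characteristic 2 with a nondegenerate
  symmetric associative form, on which G acts by form-preserving automorphisms; it is spanned by
  the classes of the elements of D, which form a single G-orbit, and d * x = <d,x> d + x + x^d.
  Hence every nonzero G-invariant ideal J is all of A: nondegeneracy gives some d \<in> D with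
  <d,x> = 1 for some x \<in> J, and then d = d * x + x + x^d lies in J. Applied to the annihilator
  of A and to the orthogonal complement of the G-orbit of a minimal ideal I, this shows that A has
  trivial annihilator and that only 0 is orthogonal to every G-image of I.

  Distinct minimal ideals meet trivially, so they annihilate each other. A minimal ideal K outside
  the orbit of I therefore satisfies <I^g, K * A> = <I^g * K, A> = 0 for all g, forcing K * A = 0
  and K = 0; so G is transitive on the minimal ideals. Their sum is a nonzero G-invariant ideal,
  hence all of A, and it is direct: if components h_J \<in> J sum to 0, then h_J annihilates J, so
  it lies in the ideal of elements of J orthogonal to J * A; this ideal is properly contained in J
  (otherwise J * A would be orthogonal to every minimal ideal), hence it is 0.
\<close>

lemma (in comm_monoid) finprod_map:
  assumes "finite A" "f \<in> A \<rightarrow> carrier G" and "\<phi> \<one> = \<one>"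
    and "\<And>x. x \<in> carrier G \<Longrightarrow> \<phi> x \<in> carrier G"
    and "\<And>x y. x \<in> carrier G \<Longrightarrow> y \<in> carrier G \<Longrightarrow> \<phi> (x \<otimes> y) = \<phi> x \<otimes> \<phi> y"
  shows "\<phi> (finprod G f A) = finprod G (\<lambda>a. \<phi> (f a)) A"
  using assms(1,2)
proof (induction A rule: finite_induct)
  case (insert a A)
  then have "f a \<in> carrier G" "f \<in> A \<rightarrow> carrier G" by auto
  with insert assms(4,5) show ?case by (simp add: Pi_def)
qed (simp add: assms(3))

lemma (in comm_monoid) finprod_eq_single:
  assumes "finite A" "a \<in> A" "f \<in> A \<rightarrow> carrier G" and "\<And>b. b \<in> A \<Longrightarrow> b \<noteq> a \<Longrightarrow> f b = \<one>"
  shows "finprod G f A = f a"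
proof -
  have "finprod G f A = finprod G f {a}"
    by (rule finprod_mono_neutral_cong_right) (use assms in auto)
  moreover have "f a \<in> carrier G" using assms(2,3) by blast
  ultimately show ?thesis by simp
qed

section \<open>Algebras of characteristic 2 spanned by an orbit of axes\<close>

text \<open>The additive group of the algebra is the commutative monoid M, written multiplicatively, so
  \<one> and \<otimes> are the zero and the addition; the form takes values in F_2 = bool, and H acts on
  the right. For A(D)/V(D), axis d is the class of d \<in> D and axis_mul is the product rule
  d * x = <d,x> d + x + x^d.\<close>

locale axial_algebra_char2 = comm_monoid M + H: group H
  for M :: "('e, 'm) monoid_scheme" (structure) and H :: "('g, 'c) monoid_scheme" +
  fixes mul :: "'e \<Rightarrow> 'e \<Rightarrow> 'e" and form :: "'e \<Rightarrow> 'e \<Rightarrow> bool"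
    and act :: "'g \<Rightarrow> 'e \<Rightarrow> 'e" and T :: "'g set" and axis :: "'g \<Rightarrow> 'e"
  assumes add_self: "x \<in> carrier M \<Longrightarrow> x \<otimes> x = \<one>"
    and finite_carrier: "finite (carrier M)"
    and mul_closed: "x \<in> carrier M \<Longrightarrow> y \<in> carrier M \<Longrightarrow> mul x y \<in> carrier M"
    and mul_comm: "x \<in> carrier M \<Longrightarrow> y \<in> carrier M \<Longrightarrow> mul x y = mul y x"
    and mul_add: "x \<in> carrier M \<Longrightarrow> y \<in> carrier M \<Longrightarrow> z \<in> carrier M \<Longrightarrow>
      mul (x \<otimes> y) z = mul x z \<otimes> mul y z"
    and form_sym: "x \<in> carrier M \<Longrightarrow> y \<in> carrier M \<Longrightarrow> form x y = form y x"
    and form_add: "x \<in> carrier M \<Longrightarrow> y \<in> carrier M \<Longrightarrow> z \<in> carrier M \<Longrightarrow>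
      form (x \<otimes> y) z = (form x z \<noteq> form y z)"
    and form_mul_assoc: "x \<in> carrier M \<Longrightarrow> y \<in> carrier M \<Longrightarrow> z \<in> carrier M \<Longrightarrow>
      form (mul x y) z = form x (mul y z)"
    and form_nondegenerate: "x \<in> carrier M \<Longrightarrow> x \<noteq> \<one> \<Longrightarrow> \<exists>y\<in>carrier M. form x y"
    and act_closed: "g \<in> carrier H \<Longrightarrow> x \<in> carrier M \<Longrightarrow> act g x \<in> carrier M"
    and act_add: "g \<in> carrier H \<Longrightarrow> x \<in> carrier M \<Longrightarrow> y \<in> carrier M \<Longrightarrow>
      act g (x \<otimes> y) = act g x \<otimes> act g y"
    and act_mul: "g \<in> carrier H \<Longrightarrow> x \<in> carrier M \<Longrightarrow> y \<in> carrier M \<Longrightarrow>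
      act g (mul x y) = mul (act g x) (act g y)"
    and act_form: "g \<in> carrier H \<Longrightarrow> x \<in> carrier M \<Longrightarrow> y \<in> carrier M \<Longrightarrow>
      form (act g x) (act g y) = form x y"
    and act_mult: "g \<in> carrier H \<Longrightarrow> h \<in> carrier H \<Longrightarrow> x \<in> carrier M \<Longrightarrow>
      act (g \<otimes>\<^bsub>H\<^esub> h) x = act h (act g x)"
    and act_one: "x \<in> carrier M \<Longrightarrow> act \<one>\<^bsub>H\<^esub> x = x"
    and axes_in_group: "T \<subseteq> carrier H"
    and axis_closed: "d \<in> T \<Longrightarrow> axis d \<in> carrier M"
    and axes_conjugate: "d \<in> T \<Longrightarrow> e \<in> T \<Longrightarrow> \<exists>g\<in>carrier H. act g (axis d) = axis e"
    and axis_mul: "d \<in> T \<Longrightarrow> x \<in> carrier M \<Longrightarrow>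
      mul (axis d) x = ((if form (axis d) x then axis d else \<one>) \<otimes> x) \<otimes> act d x"
    and axes_span: "\<one> \<in> S \<Longrightarrow> (\<And>x d. x \<in> S \<Longrightarrow> d \<in> T \<Longrightarrow> x \<otimes> axis d \<in> S) \<Longrightarrow> carrier M \<subseteq> S"
    and mul_nontrivial: "\<exists>x\<in>carrier M. \<exists>y\<in>carrier M. mul x y \<noteq> \<one>"
begin

definition is_ideal :: "'e set \<Rightarrow> bool" where
  "is_ideal J \<longleftrightarrow> J \<subseteq> carrier M \<and> \<one> \<in> J
     \<and> (\<forall>P \<in> J. \<forall>Q \<in> J. P \<otimes> Q \<in> J)
     \<and> (\<forall>P \<in> J. \<forall>Q \<in> carrier M. mul P Q \<in> J \<and> mul Q P \<in> J)"

definition minimal_ideal :: "'e set \<Rightarrow> bool" where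
  "minimal_ideal J \<longleftrightarrow> is_ideal J \<and> J \<noteq> {\<one>}
     \<and> (\<forall>K. is_ideal K \<and> K \<subseteq> J \<longrightarrow> K = {\<one>} \<or> K = J)"

definition minimal_ideals :: "'e set set" where
  "minimal_ideals = {J. minimal_ideal J}"

lemma act_zero: "g \<in> carrier H \<Longrightarrow> act g \<one> = \<one>"
  using act_add[of g \<one> \<one>] add_self act_closed by simp

lemma mul_zero: "y \<in> carrier M \<Longrightarrow> mul \<one> y = \<one>"
  using mul_add[of \<one> \<one> y] add_self mul_closed by simp

lemma form_zero: "y \<in> carrier M \<Longrightarrow> \<not> form \<one> y"
  using form_add[of \<one> \<one> y] by simp

lemma form_zero_right: "y \<in> carrier M \<Longrightarrow> \<not> form y \<one>"
  using form_zero form_sym by fastforce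

lemma form_add_right:
  assumes "x \<in> carrier M" "y \<in> carrier M" "z \<in> carrier M"
  shows "form z (x \<otimes> y) = (form z x \<noteq> form z y)"
  using form_add[OF assms] form_sym[OF assms(3) m_closed[OF assms(1,2)]]
    form_sym[OF assms(3) assms(1)] form_sym[OF assms(3) assms(2)] by simp

lemma act_inv_act:
  assumes "g \<in> carrier H" "x \<in> carrier M"
  shows "act (inv\<^bsub>H\<^esub> g) (act g x) = x"
proof -
  have "act (inv\<^bsub>H\<^esub> g) (act g x) = act (g \<otimes>\<^bsub>H\<^esub> inv\<^bsub>H\<^esub> g) x"
    using act_mult[OF assms(1) H.inv_closed[OF assms(1)] assms(2)] by simp
  also have "\<dots> = x" using assms act_one by simp
  finally show ?thesis .
qed

lemma act_act_inv:
  assumes "g \<in> carrier H" "x \<in> carrier M"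
  shows "act g (act (inv\<^bsub>H\<^esub> g) x) = x"
proof -
  have "act g (act (inv\<^bsub>H\<^esub> g) x) = act (inv\<^bsub>H\<^esub> g \<otimes>\<^bsub>H\<^esub> g) x"
    using act_mult[OF H.inv_closed[OF assms(1)] assms] by simp
  also have "\<dots> = x" using assms act_one by simp
  finally show ?thesis .
qed

lemma act_inv_image_act_image:
  assumes "g \<in> carrier H" "K \<subseteq> carrier M"
  shows "act (inv\<^bsub>H\<^esub> g) ` act g ` K = K"
proof -
  have "act (inv\<^bsub>H\<^esub> g) ` act g ` K = (\<lambda>x. act (inv\<^bsub>H\<^esub> g) (act g x)) ` K"
    by (simp add: image_image)
  also have "\<dots> = K" using assms act_inv_act by (simp add: subset_eq)
  finally show ?thesis .
qed

lemma act_image_act_inv_image: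
  assumes "g \<in> carrier H" "K \<subseteq> carrier M"
  shows "act g ` act (inv\<^bsub>H\<^esub> g) ` K = K"
proof -
  have "act g ` act (inv\<^bsub>H\<^esub> g) ` K = (\<lambda>x. act g (act (inv\<^bsub>H\<^esub> g) x)) ` K"
    by (simp add: image_image)
  also have "\<dots> = K" using assms act_act_inv by (simp add: subset_eq)
  finally show ?thesis .
qed

lemma is_idealD:
  assumes "is_ideal J"
  shows "J \<subseteq> carrier M" "\<one> \<in> J" "\<And>P Q. P \<in> J \<Longrightarrow> Q \<in> J \<Longrightarrow> P \<otimes> Q \<in> J"
    "\<And>P Q. P \<in> J \<Longrightarrow> Q \<in> carrier M \<Longrightarrow> mul P Q \<in> J"
    "\<And>P Q. P \<in> J \<Longrightarrow> Q \<in> carrier M \<Longrightarrow> mul Q P \<in> J"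
  using assms unfolding is_ideal_def by blast+

lemma is_idealI:
  assumes "J \<subseteq> carrier M" "\<one> \<in> J" "\<And>P Q. P \<in> J \<Longrightarrow> Q \<in> J \<Longrightarrow> P \<otimes> Q \<in> J"
    "\<And>P Q. P \<in> J \<Longrightarrow> Q \<in> carrier M \<Longrightarrow> mul P Q \<in> J"
  shows "is_ideal J"
  using assms mul_comm unfolding is_ideal_def by (metis subsetD)

lemma minimal_idealD:
  assumes "minimal_ideal J"
  shows "is_ideal J" "J \<subseteq> carrier M" "J \<noteq> {\<one>}"
    "\<And>K. is_ideal K \<Longrightarrow> K \<subseteq> J \<Longrightarrow> K = {\<one>} \<or> K = J"
  using assms is_idealD(1) unfolding minimal_ideal_def by blast+

lemma minimal_ideal_nonzero:
  assumes "minimal_ideal J" obtains x where "x \<in> J" "x \<noteq> \<one>"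
  using minimal_idealD[OF assms] is_idealD(2) by blast

lemma axis_orthogonal_zero:
  assumes x: "x \<in> carrier M" and orth: "\<And>d. d \<in> T \<Longrightarrow> \<not> form (axis d) x"
  shows "x = \<one>"
proof (rule ccontr)
  assume "x \<noteq> \<one>"
  then obtain y where y: "y \<in> carrier M" "form x y" using form_nondegenerate x by blast
  have "carrier M \<subseteq> {y \<in> carrier M. \<not> form x y}"
  proof (rule axes_span)
    show "\<one> \<in> {y \<in> carrier M. \<not> form x y}" using form_zero_right[OF x] by simp
    fix z d assume z: "z \<in> {y \<in> carrier M. \<not> form x y}" and d: "d \<in> T"
    have "\<not> form x (axis d)" using orth[OF d] form_sym[OF x axis_closed[OF d]] by simp
    then show "z \<otimes> axis d \<in> {y \<in> carrier M. \<not> form x y}"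
      using z form_add_right[OF _ axis_closed[OF d] x, of z] axis_closed[OF d] by simp
  qed
  then show False using y by blast
qed

lemma invariant_ideal_eq_carrier:
  assumes J: "is_ideal J" and inv: "\<And>g x. g \<in> carrier H \<Longrightarrow> x \<in> J \<Longrightarrow> act g x \<in> J"
    and x: "x \<in> J" "x \<noteq> \<one>"
  shows "J = carrier M"
proof -
  note JD = is_idealD[OF J]
  have xM: "x \<in> carrier M" using x JD(1) by blast
  obtain d where d: "d \<in> T" "form (axis d) x"
    using axis_orthogonal_zero[OF xM] x(2) by blast
  have dM: "axis d \<in> carrier M" and dxM: "act d x \<in> carrier M"
    using d axis_closed act_closed axes_in_group xM by auto
  have "mul (axis d) x = axis d \<otimes> (x \<otimes> act d x)"
    using axis_mul[OF d(1) xM] d(2) dM xM dxM by (simp add: m_assoc)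
  then have "mul (axis d) x \<otimes> (x \<otimes> act d x) = axis d \<otimes> ((x \<otimes> act d x) \<otimes> (x \<otimes> act d x))"
    using dM xM dxM by (simp add: m_assoc)
  also have "\<dots> = axis d" using add_self[of "x \<otimes> act d x"] xM dxM dM by simp
  finally have recover: "mul (axis d) x \<otimes> (x \<otimes> act d x) = axis d" .
  have "act d x \<in> J" using inv d(1) axes_in_group x(1) by blast
  then have "x \<otimes> act d x \<in> J" by (rule JD(3)[OF x(1)])
  then have "mul (axis d) x \<otimes> (x \<otimes> act d x) \<in> J" by (rule JD(3)[OF JD(5)[OF x(1) dM]])
  then have dJ: "axis d \<in> J" unfolding recover .
  have axes: "axis e \<in> J" if e: "e \<in> T" for e
  proof -
    obtain g where "g \<in> carrier H" "act g (axis d) = axis e" using axes_conjugate[OF d(1) e] by blast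
    then show ?thesis using inv[OF _ dJ] by metis
  qed
  have "carrier M \<subseteq> J"
  proof (rule axes_span)
    show "\<one> \<in> J" by (rule JD(2))
    show "z \<otimes> axis e \<in> J" if "z \<in> J" "e \<in> T" for z e
      using JD(3)[OF that(1) axes[OF that(2)]] .
  qed
  then show ?thesis using JD(1) by blast
qed

lemma annihilator_zero:
  assumes x: "x \<in> carrier M" and ann: "\<And>y. y \<in> carrier M \<Longrightarrow> mul x y = \<one>"
  shows "x = \<one>"
proof (rule ccontr)
  assume "x \<noteq> \<one>"
  let ?A = "{x \<in> carrier M. \<forall>y\<in>carrier M. mul x y = \<one>}"
  have "is_ideal ?A"
    by (rule is_idealI) (auto simp: mul_zero mul_add)
  moreover have "act g z \<in> ?A" if g: "g \<in> carrier H" and z: "z \<in> ?A" for g z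
  proof -
    have "mul (act g z) y = \<one>" if y: "y \<in> carrier M" for y
    proof -
      have "mul (act g z) y = act g (mul z (act (inv\<^bsub>H\<^esub> g) y))"
        using act_mul[of g z "act (inv\<^bsub>H\<^esub> g) y"] act_act_inv act_closed g y z by simp
      then show ?thesis using z act_closed g y act_zero by simp
    qed
    then show ?thesis using act_closed g z by blast
  qed
  ultimately have "?A = carrier M"
    by (rule invariant_ideal_eq_carrier) (use x ann \<open>x \<noteq> \<one>\<close> in auto)
  then show False using mul_nontrivial by auto
qed

lemma is_ideal_act_image:
  assumes J: "is_ideal J" and g: "g \<in> carrier H"
  shows "is_ideal (act g ` J)"
proof (rule is_idealI)
  note JD = is_idealD[OF J]
  show "act g ` J \<subseteq> carrier M" using JD(1) act_closed g by blast
  show "\<one> \<in> act g ` J" using JD(2) act_zero[OF g] by (metis image_eqI)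
  show "P \<otimes> Q \<in> act g ` J" if P: "P \<in> act g ` J" and Q: "Q \<in> act g ` J" for P Q
  proof -
    obtain a b where ab: "a \<in> J" "b \<in> J" "P = act g a" "Q = act g b" using P Q by blast
    have "a \<in> carrier M" "b \<in> carrier M" using ab(1,2) JD(1) by auto
    then have "P \<otimes> Q = act g (a \<otimes> b)" using act_add[OF g] ab(3,4) by simp
    moreover have "a \<otimes> b \<in> J" using JD(3) ab(1,2) .
    ultimately show ?thesis by blast
  qed
  show "mul P Q \<in> act g ` J" if P: "P \<in> act g ` J" and Q: "Q \<in> carrier M" for P Q
  proof -
    obtain a where a: "a \<in> J" "P = act g a" using P by blast
    have "mul P Q = act g (mul a (act (inv\<^bsub>H\<^esub> g) Q))"
      using act_mul[of g a "act (inv\<^bsub>H\<^esub> g) Q"] act_act_inv act_closed g a Q JD(1) by auto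
    then show ?thesis using JD(4) a act_closed g Q by blast
  qed
qed

lemma minimal_ideal_act_image:
  assumes J: "minimal_ideal J" and g: "g \<in> carrier H"
  shows "minimal_ideal (act g ` J)"
proof -
  note JD = minimal_idealD[OF J]
  have ig: "inv\<^bsub>H\<^esub> g \<in> carrier H" using g by simp
  have "act g ` J \<noteq> {\<one>}"
    using act_inv_image_act_image[OF g JD(2)] act_zero[OF ig] JD(3) by auto
  moreover have "K = {\<one>} \<or> K = act g ` J" if K: "is_ideal K" "K \<subseteq> act g ` J" for K
  proof -
    have "act (inv\<^bsub>H\<^esub> g) ` K \<subseteq> J"
      using K(2) act_inv_image_act_image[OF g JD(2)] by blast
    then have "act (inv\<^bsub>H\<^esub> g) ` K = {\<one>} \<or> act (inv\<^bsub>H\<^esub> g) ` K = J"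
      using JD(4) is_ideal_act_image[OF K(1) ig] by blast
    then show ?thesis
      using act_image_act_inv_image[OF g is_idealD(1)[OF K(1)]] act_zero[OF g] by auto
  qed
  ultimately show ?thesis using is_ideal_act_image[OF JD(1) g] unfolding minimal_ideal_def by blast
qed

lemma minimal_ideal_exists: "\<exists>J. minimal_ideal J"
proof -
  let ?S = "{J. is_ideal J \<and> J \<noteq> {\<one>}}"
  have "is_ideal (carrier M)"
    by (rule is_idealI) (auto simp: mul_closed)
  moreover have "carrier M \<noteq> {\<one>}" using mul_nontrivial mul_closed by (metis singletonD)
  ultimately obtain J where J: "J \<in> ?S" and least: "\<And>K. K \<in> ?S \<Longrightarrow> card J \<le> card K"
    using ex_has_least_nat[of "\<lambda>J. J \<in> ?S" "carrier M" card] by blast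
  have "finite J" using J is_idealD(1) finite_carrier finite_subset by blast
  have "K = {\<one>} \<or> K = J" if "is_ideal K" "K \<subseteq> J" for K
  proof (rule disjCI)
    assume "K \<noteq> J"
    with \<open>finite J\<close> that(2) have "card K < card J" by (simp add: psubset_card_mono)
    then show "K = {\<one>}" using least[of K] that(1) by fastforce
  qed
  then have "minimal_ideal J" using J unfolding minimal_ideal_def by blast
  then show ?thesis ..
qed

lemma minimal_ideals_annihilate:
  assumes I: "minimal_ideal I" and J: "minimal_ideal J" and "I \<noteq> J"
    and x: "x \<in> I" and y: "y \<in> J"
  shows "mul x y = \<one>"
proof -
  note ID = minimal_idealD[OF I] and JD = minimal_idealD[OF J]
  have "is_ideal (I \<inter> J)"
    by (rule is_idealI) (use is_idealD[OF ID(1)] is_idealD[OF JD(1)] in auto)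
  then have "I \<inter> J = {\<one>}"
    using ID(4) JD(4) ID(1,3) \<open>I \<noteq> J\<close> by (metis Int_lower1 Int_lower2 inf.absorb_iff1)
  moreover have "mul x y \<in> I \<inter> J"
    using is_idealD(4)[OF ID(1) x] is_idealD(5)[OF JD(1) y] x y ID(2) JD(2) by blast
  ultimately show ?thesis by blast
qed

lemma orthogonal_to_orbit_zero:
  assumes I: "minimal_ideal I" and y: "y \<in> carrier M"
    and orth: "\<And>g x. g \<in> carrier H \<Longrightarrow> x \<in> I \<Longrightarrow> \<not> form (act g x) y"
  shows "y = \<one>"
proof (rule ccontr)
  assume "y \<noteq> \<one>"
  note ID = minimal_idealD[OF I] is_idealD[OF minimal_idealD(1)[OF I]]
  let ?W = "{y \<in> carrier M. \<forall>g\<in>carrier H. \<forall>x\<in>I. \<not> form (act g x) y}"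
  have "is_ideal ?W"
  proof (rule is_idealI)
    show "\<one> \<in> ?W" using form_zero_right act_closed ID(2) by blast
    show "P \<otimes> Q \<in> ?W" if "P \<in> ?W" "Q \<in> ?W" for P Q
      using that form_add_right act_closed ID(2) by (simp add: subset_eq)
    show "mul P Q \<in> ?W" if P: "P \<in> ?W" and Q: "Q \<in> carrier M" for P Q
    proof -
      have "\<not> form (act g x) (mul P Q)" if g: "g \<in> carrier H" and x: "x \<in> I" for g x
      proof -
        have xM: "x \<in> carrier M" using x ID(2) by blast
        have "form (act g x) (mul P Q) = form (act g x) (mul Q P)"
          using mul_comm P Q by simp
        also have "\<dots> = form (mul (act g x) Q) P"
          using form_mul_assoc act_closed g xM P Q by simp
        also have "mul (act g x) Q = act g (mul x (act (inv\<^bsub>H\<^esub> g) Q))"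
          using act_mul act_closed act_act_inv g xM Q by simp
        finally show ?thesis using ID(8)[OF x] act_closed g Q P by simp
      qed
      then show ?thesis using mul_closed P Q by blast
    qed
  qed blast
  moreover have "act h z \<in> ?W" if h: "h \<in> carrier H" and z: "z \<in> ?W" for h z
  proof -
    have "\<not> form (act g x) (act h z)" if g: "g \<in> carrier H" and x: "x \<in> I" for g x
    proof -
      have xM: "x \<in> carrier M" using x ID(2) by blast
      have "act g x = act h (act (g \<otimes>\<^bsub>H\<^esub> inv\<^bsub>H\<^esub> h) x)"
        using act_mult act_act_inv act_closed g h xM by simp
      then have "form (act g x) (act h z) = form (act (g \<otimes>\<^bsub>H\<^esub> inv\<^bsub>H\<^esub> h) x) z"
        using act_form act_closed g h xM z by simp
      then show ?thesis using z g h x by simp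
    qed
    then show ?thesis using act_closed h z by blast
  qed
  ultimately have W: "?W = carrier M"
    by (rule invariant_ideal_eq_carrier) (use y orth \<open>y \<noteq> \<one>\<close> in auto)
  obtain x where x: "x \<in> I" "x \<noteq> \<one>" using minimal_ideal_nonzero[OF I] .
  then obtain w where w: "w \<in> carrier M" "form x w" using form_nondegenerate ID(2) by blast
  then have "\<not> form (act \<one>\<^bsub>H\<^esub> x) w" using W x(1) H.one_closed by blast
  then show False using act_one w(2) x(1) ID(2) by auto
qed

lemma orthogonal_to_minimal_ideals_zero:
  assumes "y \<in> carrier M" and "\<And>K x. minimal_ideal K \<Longrightarrow> x \<in> K \<Longrightarrow> \<not> form x y"
  shows "y = \<one>"
proof -
  obtain I where I: "minimal_ideal I" using minimal_ideal_exists ..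
  show ?thesis
    by (rule orthogonal_to_orbit_zero[OF I assms(1)]) (use assms(2) minimal_ideal_act_image[OF I] in blast)
qed

lemma minimal_ideals_conjugate:
  assumes I: "minimal_ideal I" and K: "minimal_ideal K"
  shows "\<exists>g\<in>carrier H. act g ` I = K"
proof (rule ccontr)
  assume outside: "\<not> ?thesis"
  note KD = minimal_idealD[OF K]
  have "k = \<one>" if k: "k \<in> K" for k
  proof (rule annihilator_zero)
    show kM: "k \<in> carrier M" using k KD(2) by blast
    fix z assume z: "z \<in> carrier M"
    show "mul k z = \<one>"
    proof (rule orthogonal_to_orbit_zero[OF I])
      show "mul k z \<in> carrier M" using mul_closed kM z by blast
      fix g x assume g: "g \<in> carrier H" and x: "x \<in> I"
      have gx: "act g x \<in> carrier M" using act_closed g x minimal_idealD(2)[OF I] by blast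
      have "mul (act g x) k = \<one>"
        using minimal_ideals_annihilate[OF minimal_ideal_act_image[OF I g] K _ _ k] outside g x by blast
      then show "\<not> form (act g x) (mul k z)"
        using form_mul_assoc[OF gx kM z] form_zero z by simp
    qed
  qed
  then show False using KD(3) is_idealD(2)[OF KD(1)] by blast
qed

subsection \<open>Decomposition into minimal ideals\<close>

lemma minimal_ideals_finite: "finite minimal_ideals"
proof (rule finite_subset)
  show "minimal_ideals \<subseteq> Pow (carrier M)"
    unfolding minimal_ideals_def using minimal_idealD(2) by blast
qed (use finite_carrier in simp)

lemma minimal_ideals_subset: "K \<in> minimal_ideals \<Longrightarrow> K \<subseteq> carrier M"
  unfolding minimal_ideals_def using minimal_idealD(2) by simp

lemma components_in_carrier:
  assumes "f \<in> (\<Pi>\<^sub>E I \<in> minimal_ideals. I)" shows "f \<in> minimal_ideals \<rightarrow> carrier M"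
proof
  fix K assume "K \<in> minimal_ideals"
  then show "f K \<in> carrier M" using PiE_mem[OF assms] minimal_ideals_subset by blast
qed

lemma act_image_minimal_ideals: "g \<in> carrier H \<Longrightarrow> K \<in> minimal_ideals \<Longrightarrow> act g ` K \<in> minimal_ideals"
  unfolding minimal_ideals_def using minimal_ideal_act_image by simp

lemma act_permutes_minimal_ideals:
  assumes g: "g \<in> carrier H"
  shows "bij_betw (\<lambda>K. act g ` K) minimal_ideals minimal_ideals"
proof (rule bij_betw_byWitness[where f' = "\<lambda>K. act (inv\<^bsub>H\<^esub> g) ` K"])
  have ig: "inv\<^bsub>H\<^esub> g \<in> carrier H" using g by simp
  show "(\<lambda>K. act g ` K) ` minimal_ideals \<subseteq> minimal_ideals"
       "(\<lambda>K. act (inv\<^bsub>H\<^esub> g) ` K) ` minimal_ideals \<subseteq> minimal_ideals"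
    using act_image_minimal_ideals g ig by auto
  show "\<forall>K\<in>minimal_ideals. act (inv\<^bsub>H\<^esub> g) ` act g ` K = K"
       "\<forall>K\<in>minimal_ideals. act g ` act (inv\<^bsub>H\<^esub> g) ` K = K"
    by (simp_all add: act_inv_image_act_image[OF g] act_image_act_inv_image[OF g] minimal_ideals_subset)
qed

lemma mul_finprod:
  "f \<in> A \<rightarrow> carrier M \<Longrightarrow> finite A \<Longrightarrow> z \<in> carrier M \<Longrightarrow>
    mul (finprod M f A) z = finprod M (\<lambda>a. mul (f a) z) A"
  by (rule finprod_map[where \<phi> = "\<lambda>x. mul x z"]) (auto simp: mul_zero mul_add mul_closed)

lemma act_finprod:
  "f \<in> A \<rightarrow> carrier M \<Longrightarrow> finite A \<Longrightarrow> g \<in> carrier H \<Longrightarrow>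
    act g (finprod M f A) = finprod M (\<lambda>a. act g (f a)) A"
  by (rule finprod_map[where \<phi> = "act g"]) (auto simp: act_zero act_add act_closed)

lemma minimal_ideal_self_annihilating_zero:
  assumes J: "minimal_ideal J" and x: "x \<in> J" and ann: "\<And>y. y \<in> J \<Longrightarrow> mul x y = \<one>"
  shows "x = \<one>"
proof -
  note JD = minimal_idealD[OF J] is_idealD[OF minimal_idealD(1)[OF J]]
  define N where "N = {x \<in> J. \<forall>y\<in>J. \<forall>z\<in>carrier M. \<not> form x (mul y z)}"
  have "is_ideal N"
  proof (rule is_idealI)
    show "N \<subseteq> carrier M" "\<one> \<in> N"
      unfolding N_def using JD(2,6) form_zero mul_closed by auto
    show "P \<otimes> Q \<in> N" if "P \<in> N" "Q \<in> N" for P Q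
      using that JD(2,7) form_add mul_closed unfolding N_def by (simp add: subset_eq)
    show "mul P Q \<in> N" if P: "P \<in> N" and Q: "Q \<in> carrier M" for P Q
    proof -
      have PM: "P \<in> carrier M" using P JD(2) unfolding N_def by blast
      have "\<not> form (mul P Q) (mul y z)" if y: "y \<in> J" and z: "z \<in> carrier M" for y z
      proof -
        have yz: "mul y z \<in> carrier M" using mul_closed y z JD(2) by blast
        have "form (mul P Q) (mul y z) = form P (mul (mul y z) Q)"
          using form_mul_assoc[OF PM Q yz] mul_comm[OF Q yz] by simp
        then show ?thesis using P JD(8)[OF y z] Q unfolding N_def by blast
      qed
      then show ?thesis using P Q JD(8) unfolding N_def by blast
    qed
  qed
  moreover have "N \<noteq> J"
  proof
    assume NJ: "N = J"
    have "y = \<one>" if y: "y \<in> J" for y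
    proof (rule annihilator_zero)
      show yM: "y \<in> carrier M" using y JD(2) by blast
      fix z assume z: "z \<in> carrier M"
      show "mul y z = \<one>"
      proof (rule orthogonal_to_minimal_ideals_zero)
        show "mul y z \<in> carrier M" using mul_closed yM z by blast
        fix K k assume K: "minimal_ideal K" and k: "k \<in> K"
        show "\<not> form k (mul y z)"
        proof (cases "K = J")
          case True
          then show ?thesis using NJ k y z unfolding N_def by blast
        next
          case False
          have kM: "k \<in> carrier M" using K k minimal_idealD(2) by blast
          show ?thesis
            using form_mul_assoc[OF kM yM z] minimal_ideals_annihilate[OF K J False k y] form_zero z
            by simp
        qed
      qed
    qed
    then show False using JD(3,6) by blast
  qed
  moreover have "x \<in> N"
  proof -
    have "\<not> form x (mul y z)" if "y \<in> J" "z \<in> carrier M" for y z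
      using form_mul_assoc[of x y z] ann[OF that(1)] form_zero that x JD(2) by auto
    then show ?thesis using x unfolding N_def by blast
  qed
  ultimately show ?thesis using JD(4) unfolding N_def by blast
qed

lemma minimal_ideal_decomposition_unique:
  assumes f: "f \<in> (\<Pi>\<^sub>E I \<in> minimal_ideals. I)" and f': "f' \<in> (\<Pi>\<^sub>E I \<in> minimal_ideals. I)"
    and eq: "finprod M f minimal_ideals = finprod M f' minimal_ideals"
  shows "f = f'"
proof (rule PiE_ext[OF f f'])
  fix J assume J: "J \<in> minimal_ideals"
  have fM: "f \<in> minimal_ideals \<rightarrow> carrier M" and f'M: "f' \<in> minimal_ideals \<rightarrow> carrier M"
    using components_in_carrier f f' by auto
  define h where "h = (\<lambda>K. f K \<otimes> f' K)"
  have hM: "h \<in> minimal_ideals \<rightarrow> carrier M" using fM f'M unfolding h_def by auto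
  have hK: "h K \<in> K" if K: "K \<in> minimal_ideals" for K
  proof -
    have "is_ideal K" using K minimal_idealD(1) unfolding minimal_ideals_def by simp
    then show ?thesis unfolding h_def using is_idealD(3) PiE_mem[OF f K] PiE_mem[OF f' K] by blast
  qed
  have "finprod M h minimal_ideals = finprod M f minimal_ideals \<otimes> finprod M f' minimal_ideals"
    unfolding h_def using finprod_multf[OF fM f'M] .
  then have sum: "finprod M h minimal_ideals = \<one>" using eq add_self f'M by simp
  have "h J = \<one>"
  proof (rule minimal_ideal_self_annihilating_zero)
    show JJ: "minimal_ideal J" "h J \<in> J" using J hK unfolding minimal_ideals_def by auto
    fix y assume y: "y \<in> J"
    have yM: "y \<in> carrier M" using y minimal_idealD(2)[OF JJ(1)] by blast
    have "mul (h J) y = finprod M (\<lambda>K. mul (h K) y) minimal_ideals"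
    proof (rule finprod_eq_single[symmetric])
      show "(\<lambda>K. mul (h K) y) \<in> minimal_ideals \<rightarrow> carrier M" using hM mul_closed yM by auto
      show "mul (h K) y = \<one>" if "K \<in> minimal_ideals" "K \<noteq> J" for K
        using minimal_ideals_annihilate[OF _ JJ(1) that(2) hK[OF that(1)] y] that(1)
        unfolding minimal_ideals_def by simp
    qed (fact minimal_ideals_finite J)+
    also have "\<dots> = mul (finprod M h minimal_ideals) y"
      using mul_finprod[OF hM minimal_ideals_finite yM] by simp
    finally show "mul (h J) y = \<one>" using sum mul_zero yM by simp
  qed
  have fJ: "f J \<in> carrier M" "f' J \<in> carrier M" using fM f'M J by auto
  then have "f J = h J \<otimes> f' J" unfolding h_def by (simp add: m_assoc add_self)
  then show "f J = f' J" using \<open>h J = \<one>\<close> fJ by simp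
qed

definition minimal_ideal_sums :: "'e set" where
  "minimal_ideal_sums = {finprod M f minimal_ideals | f. f \<in> (\<Pi>\<^sub>E I \<in> minimal_ideals. I)}"

lemma minimal_ideal_sumsI:
  "f \<in> (\<Pi>\<^sub>E I \<in> minimal_ideals. I) \<Longrightarrow> finprod M f minimal_ideals \<in> minimal_ideal_sums"
  unfolding minimal_ideal_sums_def by blast

lemma minimal_ideal_sumsE:
  assumes "P \<in> minimal_ideal_sums"
  obtains f where "f \<in> (\<Pi>\<^sub>E I \<in> minimal_ideals. I)" "f \<in> minimal_ideals \<rightarrow> carrier M"
    "P = finprod M f minimal_ideals"
proof -
  from assms obtain f where f: "f \<in> (\<Pi>\<^sub>E I \<in> minimal_ideals. I)" "P = finprod M f minimal_ideals"
    unfolding minimal_ideal_sums_def by blast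
  show thesis by (rule that[OF f(1) components_in_carrier[OF f(1)] f(2)])
qed

lemma is_ideal_minimal_ideal_sums: "is_ideal minimal_ideal_sums"
proof (rule is_idealI)
  have ideal: "is_ideal J" if "J \<in> minimal_ideals" for J
    using that minimal_idealD(1) unfolding minimal_ideals_def by blast
  show "minimal_ideal_sums \<subseteq> carrier M"
  proof
    fix P assume "P \<in> minimal_ideal_sums"
    then show "P \<in> carrier M" by (rule minimal_ideal_sumsE) simp
  qed
  have "finprod M (\<lambda>J\<in>minimal_ideals. \<one>) minimal_ideals \<in> minimal_ideal_sums"
    by (rule minimal_ideal_sumsI) (use is_idealD(2)[OF ideal] in \<open>simp add: restrict_PiE_iff\<close>)
  moreover have "finprod M (\<lambda>J\<in>minimal_ideals. \<one>) minimal_ideals = \<one>"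
    by (rule finprod_one_eqI) simp
  ultimately show "\<one> \<in> minimal_ideal_sums" by simp
  show "P \<otimes> Q \<in> minimal_ideal_sums" if P: "P \<in> minimal_ideal_sums" and Q: "Q \<in> minimal_ideal_sums" for P Q
  proof -
    obtain f where f: "f \<in> (\<Pi>\<^sub>E I \<in> minimal_ideals. I)" "f \<in> minimal_ideals \<rightarrow> carrier M"
        "P = finprod M f minimal_ideals"
      using P by (rule minimal_ideal_sumsE)
    obtain f' where f': "f' \<in> (\<Pi>\<^sub>E I \<in> minimal_ideals. I)" "f' \<in> minimal_ideals \<rightarrow> carrier M"
        "Q = finprod M f' minimal_ideals"
      using Q by (rule minimal_ideal_sumsE)
    have "P \<otimes> Q = finprod M (\<lambda>J. f J \<otimes> f' J) minimal_ideals"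
      using finprod_multf[OF f(2) f'(2)] f(3) f'(3) by simp
    also have "\<dots> = finprod M (\<lambda>J\<in>minimal_ideals. f J \<otimes> f' J) minimal_ideals"
      by (rule finprod_cong') (use f(2) f'(2) in auto)
    finally have "P \<otimes> Q = finprod M (\<lambda>J\<in>minimal_ideals. f J \<otimes> f' J) minimal_ideals" .
    moreover have "(\<lambda>J\<in>minimal_ideals. f J \<otimes> f' J) \<in> (\<Pi>\<^sub>E I \<in> minimal_ideals. I)"
      unfolding restrict_PiE_iff using f(1) f'(1) is_idealD(3)[OF ideal] PiE_mem by blast
    ultimately show ?thesis using minimal_ideal_sumsI by simp
  qed
  show "mul P Q \<in> minimal_ideal_sums" if P: "P \<in> minimal_ideal_sums" and Q: "Q \<in> carrier M" for P Q
  proof -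
    obtain f where f: "f \<in> (\<Pi>\<^sub>E I \<in> minimal_ideals. I)" "f \<in> minimal_ideals \<rightarrow> carrier M"
        "P = finprod M f minimal_ideals"
      using P by (rule minimal_ideal_sumsE)
    have "mul P Q = finprod M (\<lambda>J. mul (f J) Q) minimal_ideals"
      using mul_finprod[OF f(2) minimal_ideals_finite Q] f(3) by simp
    also have "\<dots> = finprod M (\<lambda>J\<in>minimal_ideals. mul (f J) Q) minimal_ideals"
      by (rule finprod_cong') (use f(2) Q mul_closed in auto)
    finally have "mul P Q = finprod M (\<lambda>J\<in>minimal_ideals. mul (f J) Q) minimal_ideals" .
    moreover have "(\<lambda>J\<in>minimal_ideals. mul (f J) Q) \<in> (\<Pi>\<^sub>E I \<in> minimal_ideals. I)"
      unfolding restrict_PiE_iff using f(1) Q is_idealD(4)[OF ideal] PiE_mem by blast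
    ultimately show ?thesis using minimal_ideal_sumsI by simp
  qed
qed

lemma act_minimal_ideal_sums:
  assumes g: "g \<in> carrier H" and P: "P \<in> minimal_ideal_sums"
  shows "act g P \<in> minimal_ideal_sums"
proof -
  let ?\<phi> = "\<lambda>K. act g ` K" and ?\<psi> = "\<lambda>K. act (inv\<^bsub>H\<^esub> g) ` K"
  obtain f where f: "f \<in> (\<Pi>\<^sub>E I \<in> minimal_ideals. I)" "f \<in> minimal_ideals \<rightarrow> carrier M"
      "P = finprod M f minimal_ideals"
    using P by (rule minimal_ideal_sumsE)
  have bij: "bij_betw ?\<phi> minimal_ideals minimal_ideals" using act_permutes_minimal_ideals[OF g] .
  have ig: "inv\<^bsub>H\<^esub> g \<in> carrier H" using g by simp
  have \<psi>: "?\<psi> K \<in> minimal_ideals" "?\<phi> (?\<psi> K) = K" "?\<psi> (?\<phi> K) = K" if K: "K \<in> minimal_ideals" for K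
    using act_image_minimal_ideals[OF ig K] act_image_act_inv_image[OF g] act_inv_image_act_image[OF g]
      minimal_ideals_subset[OF K] by simp_all
  define f' where "f' = (\<lambda>K\<in>minimal_ideals. act g (f (?\<psi> K)))"
  have f': "f' \<in> (\<Pi>\<^sub>E I \<in> minimal_ideals. I)"
  proof -
    have "act g (f (?\<psi> K)) \<in> K" if K: "K \<in> minimal_ideals" for K
    proof -
      have "f (?\<psi> K) \<in> ?\<psi> K" using f(1) \<psi>(1)[OF K] by (rule PiE_mem)
      then show ?thesis using \<psi>(2)[OF K] by blast
    qed
    then show ?thesis unfolding f'_def by (simp add: restrict_PiE_iff)
  qed
  have "finprod M f' minimal_ideals = finprod M f' (?\<phi> ` minimal_ideals)"
    using bij_betw_imp_surj_on[OF bij] by simp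
  also have "\<dots> = finprod M (\<lambda>K. f' (?\<phi> K)) minimal_ideals"
    using finprod_reindex[of f' ?\<phi> minimal_ideals] bij_betw_imp_inj_on[OF bij]
      bij_betw_imp_surj_on[OF bij] components_in_carrier[OF f'] by simp
  also have "\<dots> = finprod M (\<lambda>K. act g (f K)) minimal_ideals"
  proof (rule finprod_cong')
    show "(\<lambda>K. act g (f K)) \<in> minimal_ideals \<rightarrow> carrier M" using f(2) act_closed g by auto
    fix K assume K: "K \<in> minimal_ideals"
    show "f' (?\<phi> K) = act g (f K)" using bij_betw_apply[OF bij K] \<psi>(3)[OF K] by (simp add: f'_def)
  qed simp
  also have "\<dots> = act g P" using act_finprod[OF f(2) minimal_ideals_finite g] f(3) by simp
  finally show ?thesis using minimal_ideal_sumsI[OF f'] by simp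
qed

lemma minimal_ideal_decomposition_exists:
  assumes x: "x \<in> carrier M"
  shows "\<exists>f. f \<in> (\<Pi>\<^sub>E I \<in> minimal_ideals. I) \<and> finprod M f minimal_ideals = x"
proof -
  obtain I where I: "minimal_ideal I" using minimal_ideal_exists ..
  then obtain y where y: "y \<in> I" "y \<noteq> \<one>" by (rule minimal_ideal_nonzero)
  have I': "I \<in> minimal_ideals" using I unfolding minimal_ideals_def by simp
  define f where "f = (\<lambda>J\<in>minimal_ideals. if J = I then y else \<one>)"
  have "\<one> \<in> J" if "J \<in> minimal_ideals" for J
    using that minimal_idealD(1) is_idealD(2) unfolding minimal_ideals_def by blast
  then have f: "f \<in> (\<Pi>\<^sub>E I \<in> minimal_ideals. I)"
    using y(1) unfolding f_def by (simp add: restrict_PiE_iff)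
  have "finprod M f minimal_ideals = f I"
    by (rule finprod_eq_single[OF minimal_ideals_finite I' components_in_carrier[OF f]])
      (simp add: f_def)
  then have "y \<in> minimal_ideal_sums" using minimal_ideal_sumsI[OF f] I' by (simp add: f_def)
  from invariant_ideal_eq_carrier[OF is_ideal_minimal_ideal_sums act_minimal_ideal_sums this y(2)]
  have "minimal_ideal_sums = carrier M" .
  with x have "x \<in> minimal_ideal_sums" by simp
  then obtain f where "f \<in> (\<Pi>\<^sub>E I \<in> minimal_ideals. I)" "f \<in> minimal_ideals \<rightarrow> carrier M"
      "x = finprod M f minimal_ideals"
    by (rule minimal_ideal_sumsE)
  then show ?thesis by blast
qed

lemma minimal_ideal_decomposition:
  assumes "x \<in> carrier M"
  shows "\<exists>!f. f \<in> (\<Pi>\<^sub>E I \<in> minimal_ideals. I) \<and> finprod M f minimal_ideals = x"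
proof (rule ex_ex1I)
  show "\<exists>f. f \<in> (\<Pi>\<^sub>E I \<in> minimal_ideals. I) \<and> finprod M f minimal_ideals = x"
    by (rule minimal_ideal_decomposition_exists[OF assms])
  fix f f'
  assume "f \<in> (\<Pi>\<^sub>E I \<in> minimal_ideals. I) \<and> finprod M f minimal_ideals = x"
    and "f' \<in> (\<Pi>\<^sub>E I \<in> minimal_ideals. I) \<and> finprod M f' minimal_ideals = x"
  then show "f = f'" by (intro minimal_ideal_decomposition_unique) auto
qed

end

section \<open>The algebra of a class of 3-transpositions\<close>

lemma sdiff_iff [simp]: "x \<in> sdiff X Y \<longleftrightarrow> (x \<in> X) \<noteq> (x \<in> Y)"
  unfolding sdiff_def by blast

text \<open>The form of A(D)/V(D), evaluated at arbitrary representatives of the classes;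
  it is well defined because V(D) is the radical (see qform_qcls).\<close>

definition qform :: "('a, 'b) monoid_scheme \<Rightarrow> 'a set set \<Rightarrow> 'a set set \<Rightarrow> bool" where
  "qform G P Q = bform G (SOME X. X \<in> P) (SOME Y. Y \<in> Q)"

lemma Abar_add_simps:
  "carrier (Abar_add G D) = Abar G D" "mult (Abar_add G D) = qadd" "one (Abar_add G D) = qzero G D"
  by (simp_all add: Abar_add_def)

locale three_transposition_class = group G for G :: "('a, 'b) monoid_scheme" (structure) +
  fixes D :: "'a set"
  assumes D_three_transp: "three_transp G D" and finite_D: "finite D"
begin

lemma D_subset: "D \<subseteq> carrier G"
  using D_three_transp unfolding three_transp_def by blast

lemma D_carrier: "d \<in> D \<Longrightarrow> d \<in> carrier G"
  using D_subset by blast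

lemma D_invol: "d \<in> D \<Longrightarrow> d \<otimes> d = \<one>"
  using D_three_transp unfolding three_transp_def by blast

lemma inv_D: "d \<in> D \<Longrightarrow> inv d = d"
  using inv_equality[of d d] D_invol D_carrier by blast

lemma ord_D_mult: "d \<in> D \<Longrightarrow> e \<in> D \<Longrightarrow> ord (d \<otimes> e) \<in> {1, 2, 3}"
  using D_three_transp unfolding three_transp_def by blast

lemma conjg_eq: "conjg G d g = inv g \<otimes> d \<otimes> g"
  by (simp add: conjg_def)

lemma conjg_closed: "x \<in> carrier G \<Longrightarrow> g \<in> carrier G \<Longrightarrow> conjg G x g \<in> carrier G"
  by (simp add: conjg_eq)

lemma conjg_comp: "x \<in> carrier G \<Longrightarrow> g \<in> carrier G \<Longrightarrow> h \<in> carrier G \<Longrightarrow>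
   conjg G (conjg G x g) h = conjg G x (g \<otimes> h)"
  by (simp add: conjg_eq inv_mult_group m_assoc)

lemma conjg_one: "x \<in> carrier G \<Longrightarrow> conjg G x \<one> = x"
  by (simp add: conjg_eq)

lemma mult_inv_cancel_left: "g \<in> carrier G \<Longrightarrow> z \<in> carrier G \<Longrightarrow> g \<otimes> (inv g \<otimes> z) = z"
  by (metis inv_closed m_assoc r_inv l_one)

lemma conjg_mult_distrib: "x \<in> carrier G \<Longrightarrow> y \<in> carrier G \<Longrightarrow> g \<in> carrier G \<Longrightarrow>
   conjg G (x \<otimes> y) g = conjg G x g \<otimes> conjg G y g"
proof -
  assume a: "x \<in> carrier G" "y \<in> carrier G" "g \<in> carrier G"
  have "conjg G x g \<otimes> conjg G y g = inv g \<otimes> (x \<otimes> (g \<otimes> (inv g \<otimes> (y \<otimes> g))))"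
    using a by (simp add: conjg_eq m_assoc)
  also have "\<dots> = inv g \<otimes> (x \<otimes> (y \<otimes> g))" using a mult_inv_cancel_left[of g "y \<otimes> g"] by simp
  finally show ?thesis using a by (simp add: conjg_eq m_assoc)
qed

lemma conjg_inv_cancel: "x \<in> carrier G \<Longrightarrow> g \<in> carrier G \<Longrightarrow> conjg G (conjg G x g) (inv g) = x"
  by (simp add: conjg_comp conjg_one)

lemma conjg_inj: "x \<in> carrier G \<Longrightarrow> y \<in> carrier G \<Longrightarrow> g \<in> carrier G \<Longrightarrow>
   conjg G x g = conjg G y g \<Longrightarrow> x = y"
proof -
  assume a: "x \<in> carrier G" "y \<in> carrier G" "g \<in> carrier G" "conjg G x g = conjg G y g"
  have "x = conjg G (conjg G x g) (inv g)" using conjg_inv_cancel[OF a(1) a(3)] by (rule sym)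
  also have "\<dots> = conjg G (conjg G y g) (inv g)" using a(4) by simp
  also have "\<dots> = y" using conjg_inv_cancel[OF a(2) a(3)] .
  finally show "x = y" .
qed

lemma conjg_in_D: "d \<in> D \<Longrightarrow> g \<in> carrier G \<Longrightarrow> conjg G d g \<in> D"
proof -
  assume d: "d \<in> D" and g: "g \<in> carrier G"
  obtain d0 where d0: "d0 \<in> carrier G" "D = {inv h \<otimes> d0 \<otimes> h | h. h \<in> carrier G}"
    using D_three_transp unfolding three_transp_def by blast
  then obtain h where h: "h \<in> carrier G" "d = conjg G d0 h" using d by (auto simp: conjg_eq)
  then have "conjg G d g = conjg G d0 (h \<otimes> g)" using conjg_comp d0 g by simp
  then show ?thesis using d0 h g by (auto simp: conjg_eq)
qed

lemma D_conjugate: "d \<in> D \<Longrightarrow> e \<in> D \<Longrightarrow> \<exists>g\<in>carrier G. conjg G d g = e"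
proof -
  assume d: "d \<in> D" and e: "e \<in> D"
  obtain d0 where d0: "d0 \<in> carrier G" "D = {inv h \<otimes> d0 \<otimes> h | h. h \<in> carrier G}"
    using D_three_transp unfolding three_transp_def by blast
  then obtain h where h: "h \<in> carrier G" "d = conjg G d0 h" using d by (auto simp: conjg_eq)
  obtain k where k: "k \<in> carrier G" "e = conjg G d0 k" using d0 e by (auto simp: conjg_eq)
  have ih: "inv h \<in> carrier G" using h(1) by simp
  have "conjg G d (inv h \<otimes> k) = conjg G (conjg G d (inv h)) k" using conjg_comp[OF D_carrier[OF d] ih k(1)] by simp
  also have "conjg G d (inv h) = d0" unfolding h(2) using conjg_inv_cancel[OF d0(1) h(1)] .
  finally have "conjg G d (inv h \<otimes> k) = e" using k(2) by simp
  moreover have "inv h \<otimes> k \<in> carrier G" using ih k(1) by simp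
  ultimately show ?thesis by blast
qed

lemma commutes_conjg: "a \<in> carrier G \<Longrightarrow> b \<in> carrier G \<Longrightarrow> g \<in> carrier G \<Longrightarrow>
   commutes G (conjg G a g) (conjg G b g) \<longleftrightarrow> commutes G a b"
proof -
  assume a: "a \<in> carrier G" "b \<in> carrier G" "g \<in> carrier G"
  have "conjg G a g \<otimes> conjg G b g = conjg G (a \<otimes> b) g" using conjg_mult_distrib a by simp
  moreover have "conjg G b g \<otimes> conjg G a g = conjg G (b \<otimes> a) g" using conjg_mult_distrib a by simp
  ultimately have "(conjg G a g \<otimes> conjg G b g = conjg G b g \<otimes> conjg G a g) \<longleftrightarrow> (a \<otimes> b = b \<otimes> a)"
    using conjg_inj[of "a \<otimes> b" "b \<otimes> a" g] a by auto
  then show ?thesis unfolding commutes_def .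
qed

lemma braid_relation:
  assumes d: "d \<in> D" and e: "e \<in> D" and nc: "\<not> commutes G d e"
  shows "d \<otimes> e \<otimes> d = e \<otimes> d \<otimes> e"
proof -
  have dc: "d \<in> carrier G" and ec: "e \<in> carrier G" using D_carrier d e by auto
  let ?x = "d \<otimes> e"
  have xc: "?x \<in> carrier G" using dc ec by simp
  have px: "?x [^] ord ?x = \<one>" using pow_ord_eq_1[OF xc] .
  have pow: "?x [^] (1::nat) = ?x" "?x [^] (2::nat) = ?x \<otimes> ?x" "?x [^] (3::nat) = ?x \<otimes> ?x \<otimes> ?x"
    using xc by (simp_all add: numeral_eq_Suc)
  have "ord ?x \<in> {1, 2, 3}" using ord_D_mult d e .
  moreover have "ord ?x \<noteq> 1"
  proof
    assume "ord ?x = 1"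
    then have "?x = \<one>" using px pow by simp
    then have "inv e = d" using inv_equality[OF _ ec dc] by simp
    then have "d = e" using inv_D e by simp
    then show False using nc unfolding commutes_def by simp
  qed
  moreover have "ord ?x \<noteq> 2"
  proof
    assume "ord ?x = 2"
    then have "?x \<otimes> ?x = \<one>" using px pow by simp
    then have "inv ?x = ?x" using inv_equality[OF _ xc xc] by simp
    moreover have "inv ?x = e \<otimes> d" using inv_mult_group[OF dc ec] inv_D d e by simp
    ultimately show False using nc unfolding commutes_def by simp
  qed
  ultimately have "ord ?x = 3" by simp
  then have "?x \<otimes> ?x \<otimes> ?x = \<one>" using px pow by simp
  then have "(d \<otimes> e \<otimes> d) \<otimes> (e \<otimes> d \<otimes> e) = \<one>" using dc ec by (simp add: m_assoc)
  then have "inv (e \<otimes> d \<otimes> e) = d \<otimes> e \<otimes> d" using inv_equality dc ec by simp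
  moreover have "inv (e \<otimes> d \<otimes> e) = e \<otimes> d \<otimes> e"
    using inv_mult_group dc ec inv_D d e by (simp add: m_assoc)
  ultimately show ?thesis by simp
qed

lemma conjg_D: "d \<in> D \<Longrightarrow> e \<in> D \<Longrightarrow> conjg G d e = e \<otimes> d \<otimes> e"
  using inv_D by (simp add: conjg_eq)

lemma conjg_sym: "d \<in> D \<Longrightarrow> e \<in> D \<Longrightarrow> \<not> commutes G d e \<Longrightarrow> conjg G d e = conjg G e d"
  using braid_relation[of d e] conjg_D[of d e] conjg_D[of e d] by simp

lemma conjg_commuting: "d \<in> D \<Longrightarrow> e \<in> D \<Longrightarrow> commutes G d e \<Longrightarrow> conjg G d e = d"
proof -
  assume d: "d \<in> D" and e: "e \<in> D" and c: "commutes G d e"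
  have dc: "d \<in> carrier G" and ec: "e \<in> carrier G" using D_carrier d e by auto
  have "e \<otimes> d \<otimes> e = d \<otimes> e \<otimes> e" using c unfolding commutes_def by simp
  also have "\<dots> = d" using D_invol[OF e] dc ec by (simp add: m_assoc)
  finally show ?thesis using conjg_D d e by simp
qed

lemma commutes_sym: "commutes G a b \<longleftrightarrow> commutes G b a"
  unfolding commutes_def by auto

lemma commutes_refl: "commutes G a a"
  unfolding commutes_def by auto

lemma noncommuting_neq: "\<not> commutes G d e \<Longrightarrow> d \<noteq> e"
  using commutes_refl by auto

lemma conjg_neq_left: "d \<in> D \<Longrightarrow> e \<in> D \<Longrightarrow> \<not> commutes G d e \<Longrightarrow> conjg G d e \<noteq> d"
proof
  assume d: "d \<in> D" and e: "e \<in> D" and nc: "\<not> commutes G d e" and eq: "conjg G d e = d"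
  have dc: "d \<in> carrier G" and ec: "e \<in> carrier G" using D_carrier d e by auto
  have "e \<otimes> d \<otimes> e = d" using eq conjg_D d e by simp
  then have "e \<otimes> (e \<otimes> d \<otimes> e) = e \<otimes> d" by simp
  moreover have "e \<otimes> (e \<otimes> d \<otimes> e) = d \<otimes> e"
    using D_invol[OF e] dc ec by (simp add: m_assoc[symmetric])
  ultimately show False using nc unfolding commutes_def by simp
qed

lemma conjg_neq_right: "d \<in> D \<Longrightarrow> e \<in> D \<Longrightarrow> \<not> commutes G d e \<Longrightarrow> conjg G d e \<noteq> e"
proof
  assume d: "d \<in> D" and e: "e \<in> D" and nc: "\<not> commutes G d e" and eq: "conjg G d e = e"
  have dc: "d \<in> carrier G" and ec: "e \<in> carrier G" using D_carrier d e by auto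
  have "e \<otimes> d \<otimes> e = e" using eq conjg_D d e by simp
  then have "(e \<otimes> d \<otimes> e) \<otimes> e = e \<otimes> e" by simp
  then have "e \<otimes> d = \<one>" using D_invol[OF e] dc ec by (simp add: m_assoc)
  then have "inv d = e" using inv_equality[OF _ dc ec] by simp
  then have "d = e" using inv_D d by simp
  then show False using nc commutes_refl by simp
qed

lemma conjg_conjg_cancel: "d \<in> D \<Longrightarrow> e \<in> D \<Longrightarrow> \<not> commutes G d e \<Longrightarrow> conjg G (conjg G e d) e = d"
proof -
  assume d: "d \<in> D" and e: "e \<in> D" and nc: "\<not> commutes G d e"
  have dc: "d \<in> carrier G" and ec: "e \<in> carrier G" using D_carrier d e by auto
  have "conjg G e d = e \<otimes> d \<otimes> e" using conjg_sym[OF d e nc] conjg_D[OF d e] by simp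
  moreover have "e \<otimes> d \<otimes> e \<in> D" using conjg_D[OF d e] conjg_in_D[OF d ec] by simp
  ultimately have "conjg G (conjg G e d) e = e \<otimes> (e \<otimes> d \<otimes> e) \<otimes> e" using conjg_D e by simp
  also have "\<dots> = (e \<otimes> e) \<otimes> d \<otimes> (e \<otimes> e)" using dc ec by (simp add: m_assoc)
  also have "\<dots> = d" using D_invol[OF e] dc by simp
  finally show ?thesis .
qed

lemma odd_card_sdiff:
  assumes "finite S" "finite T"
  shows "odd (card (sdiff S T)) \<longleftrightarrow> (odd (card S) \<noteq> odd (card T))"
proof -
  have e: "sdiff S T = (S - T) \<union> (T - S)" unfolding sdiff_def ..
  have c1: "card (sdiff S T) = card (S - T) + card (T - S)"
    unfolding e by (rule card_Un_disjoint) (use assms in auto)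
  have c2: "card S = card (S - T) + card (S \<inter> T)"
  proof -
    have "S = (S - T) \<union> (S \<inter> T)" by blast
    then have "card S = card ((S - T) \<union> (S \<inter> T))" by simp
    also have "\<dots> = card (S - T) + card (S \<inter> T)" by (rule card_Un_disjoint) (use assms in auto)
    finally show ?thesis .
  qed
  have c3: "card T = card (T - S) + card (S \<inter> T)"
  proof -
    have "T = (T - S) \<union> (S \<inter> T)" by blast
    then have "card T = card ((T - S) \<union> (S \<inter> T))" by simp
    also have "\<dots> = card (T - S) + card (S \<inter> T)" by (rule card_Un_disjoint) (use assms in auto)
    finally show ?thesis .
  qed
  show ?thesis using c1 c2 c3 by presburger
qed

lemma odd_card_pairs_sdiff_left:
  assumes "finite X" "finite X'" "finite Y"
  shows "odd (card {(d, e). d \<in> sdiff X X' \<and> e \<in> Y \<and> R d e}) \<longleftrightarrow>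
    (odd (card {(d, e). d \<in> X \<and> e \<in> Y \<and> R d e}) \<noteq> odd (card {(d, e). d \<in> X' \<and> e \<in> Y \<and> R d e}))"
proof -
  have eq: "{(d, e). d \<in> sdiff X X' \<and> e \<in> Y \<and> R d e} =
     sdiff {(d, e). d \<in> X \<and> e \<in> Y \<and> R d e} {(d, e). d \<in> X' \<and> e \<in> Y \<and> R d e}"
    by (auto simp: sdiff_def)
  have f1: "finite {(d, e). d \<in> X \<and> e \<in> Y \<and> R d e}"
    by (rule finite_subset[of _ "X \<times> Y"]) (use assms in auto)
  have f2: "finite {(d, e). d \<in> X' \<and> e \<in> Y \<and> R d e}"
    by (rule finite_subset[of _ "X' \<times> Y"]) (use assms in auto)
  show ?thesis unfolding eq using odd_card_sdiff[OF f1 f2] .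
qed

lemma odd_card_pairs_sdiff_right:
  assumes "finite X" "finite Y" "finite Y'"
  shows "odd (card {(d, e). d \<in> X \<and> e \<in> sdiff Y Y' \<and> R d e}) \<longleftrightarrow>
    (odd (card {(d, e). d \<in> X \<and> e \<in> Y \<and> R d e}) \<noteq> odd (card {(d, e). d \<in> X \<and> e \<in> Y' \<and> R d e}))"
proof -
  have eq: "{(d, e). d \<in> X \<and> e \<in> sdiff Y Y' \<and> R d e} =
     sdiff {(d, e). d \<in> X \<and> e \<in> Y \<and> R d e} {(d, e). d \<in> X \<and> e \<in> Y' \<and> R d e}"
    by (auto simp: sdiff_def)
  have f1: "finite {(d, e). d \<in> X \<and> e \<in> Y \<and> R d e}"
    by (rule finite_subset[of _ "X \<times> Y"]) (use assms in auto)
  have f2: "finite {(d, e). d \<in> X \<and> e \<in> Y' \<and> R d e}"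
    by (rule finite_subset[of _ "X \<times> Y'"]) (use assms in auto)
  show ?thesis unfolding eq using odd_card_sdiff[OF f1 f2] .
qed

lemma bform_sdiff_left: "finite X \<Longrightarrow> finite X' \<Longrightarrow> finite Y \<Longrightarrow>
  bform G (sdiff X X') Y \<longleftrightarrow> (bform G X Y \<noteq> bform G X' Y)"
  unfolding bform_def by (rule odd_card_pairs_sdiff_left)

lemma bform_sdiff_right: "finite X \<Longrightarrow> finite Y \<Longrightarrow> finite Y' \<Longrightarrow>
  bform G X (sdiff Y Y') \<longleftrightarrow> (bform G X Y \<noteq> bform G X Y')"
  unfolding bform_def by (rule odd_card_pairs_sdiff_right)

lemma amul_sdiff_left: assumes a: "finite X" "finite X'" "finite Y"
  shows "amul G (sdiff X X') Y = sdiff (amul G X Y) (amul G X' Y)"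
proof (rule Set.set_eqI)
  fix f
  show "f \<in> amul G (sdiff X X') Y \<longleftrightarrow> f \<in> sdiff (amul G X Y) (amul G X' Y)"
    unfolding sdiff_iff[of f] unfolding amul_def mem_Collect_eq
    using odd_card_pairs_sdiff_left[OF a, of "\<lambda>d e. f \<in> bmul G d e"] by simp
qed

lemma amul_sdiff_right: assumes a: "finite X" "finite Y" "finite Y'"
  shows "amul G X (sdiff Y Y') = sdiff (amul G X Y) (amul G X Y')"
proof (rule Set.set_eqI)
  fix f
  show "f \<in> amul G X (sdiff Y Y') \<longleftrightarrow> f \<in> sdiff (amul G X Y) (amul G X Y')"
    unfolding sdiff_iff[of f] unfolding amul_def mem_Collect_eq
    using odd_card_pairs_sdiff_right[OF a, of "\<lambda>d e. f \<in> bmul G d e"] by simp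
qed

lemma bform_empty_left: "\<not> bform G {} Y"
  unfolding bform_def by simp

lemma bform_empty_right: "\<not> bform G X {}"
  unfolding bform_def by simp

lemma amul_empty_left: "amul G {} Y = {}"
  unfolding amul_def by simp

lemma amul_empty_right: "amul G X {} = {}"
  unfolding amul_def by simp

lemma bform_singletons: "bform G {d} {e} \<longleftrightarrow> \<not> commutes G d e"
proof -
  have "{(x, y). x \<in> {d} \<and> y \<in> {e} \<and> \<not> commutes G x y} = (if commutes G d e then {} else {(d, e)})"
    by auto
  then show ?thesis unfolding bform_def by simp
qed

lemma amul_singletons: "amul G {d} {e} = bmul G d e"
proof -
  have "{(x, y). x \<in> {d} \<and> y \<in> {e} \<and> f \<in> bmul G x y} = (if f \<in> bmul G d e then {(d, e)} else {})" for f
    by auto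
  then show ?thesis unfolding amul_def by auto
qed

lemma subset_D_induct [consumes 1, case_names empty single sdiff]:
  assumes X: "X \<subseteq> D" and P0: "P {}" and P1: "\<And>d. d \<in> D \<Longrightarrow> P {d}"
    and Ps: "\<And>X Y. X \<subseteq> D \<Longrightarrow> Y \<subseteq> D \<Longrightarrow> P X \<Longrightarrow> P Y \<Longrightarrow> P (sdiff X Y)"
  shows "P X"
proof -
  have "finite X" using X finite_D finite_subset by blast
  then show ?thesis using X
  proof (induction X rule: finite_induct)
    case empty
    show ?case by (rule P0)
  next
    case (insert x F)
    have "insert x F = sdiff F {x}" using insert.hyps(2) by (auto simp: sdiff_def)
    moreover have "P (sdiff F {x})"
      by (rule Ps) (use insert P1 in auto)
    ultimately show ?case by simp
  qed
qed

lemma finite_subset_D: "X \<subseteq> D \<Longrightarrow> finite X"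
  using finite_D finite_subset by blast

lemma sdiff_subset: "X \<subseteq> D \<Longrightarrow> Y \<subseteq> D \<Longrightarrow> sdiff X Y \<subseteq> D"
  unfolding sdiff_def by blast

lemma bform_sym:
  assumes X: "X \<subseteq> D" and Y: "Y \<subseteq> D"
  shows "bform G X Y = bform G Y X"
  using X
proof (induction X rule: subset_D_induct)
  case empty
  show ?case using bform_empty_left bform_empty_right by simp
next
  case (single d)
  show ?case using Y
  proof (induction Y rule: subset_D_induct)
    case empty
    show ?case using bform_empty_left bform_empty_right by simp
  next
    case (single e)
    show ?case using bform_singletons commutes_sym by simp
  next
    case (sdiff Y1 Y2)
    then show ?case using bform_sdiff_left bform_sdiff_right finite_subset_D by simp
  qed
next
  case (sdiff X1 X2)
  then show ?case using bform_sdiff_left bform_sdiff_right finite_subset_D Y by simp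
qed

lemma inj_on_conjg: "g \<in> carrier G \<Longrightarrow> inj_on (\<lambda>d. conjg G d g) (carrier G)"
  by (rule inj_onI) (use conjg_inj in blast)

lemma gact_sdiff:
  assumes "X \<subseteq> carrier G" "Y \<subseteq> carrier G" "g \<in> carrier G"
  shows "gact_set G g (sdiff X Y) = sdiff (gact_set G g X) (gact_set G g Y)"
proof -
  have i: "inj_on (\<lambda>d. conjg G d g) (carrier G)" using inj_on_conjg assms(3) .
  have "gact_set G g (sdiff X Y) = (\<lambda>d. conjg G d g) ` (X - Y) \<union> (\<lambda>d. conjg G d g) ` (Y - X)"
    unfolding gact_set_def sdiff_def by (rule image_Un)
  also have "\<dots> = ((\<lambda>d. conjg G d g) ` X - (\<lambda>d. conjg G d g) ` Y) \<union> ((\<lambda>d. conjg G d g) ` Y - (\<lambda>d. conjg G d g) ` X)"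
    using inj_on_image_set_diff[OF i, of X Y] inj_on_image_set_diff[OF i, of Y X] assms by auto
  finally show ?thesis unfolding gact_set_def sdiff_def .
qed

lemma gact_set_singleton: "gact_set G g {d} = {conjg G d g}"
  unfolding gact_set_def by simp

lemma gact_set_empty: "gact_set G g {} = {}"
  unfolding gact_set_def by simp

lemma gact_set_subset_D: "X \<subseteq> D \<Longrightarrow> g \<in> carrier G \<Longrightarrow> gact_set G g X \<subseteq> D"
  unfolding gact_set_def using conjg_in_D by blast

lemma gact_set_mult: "X \<subseteq> carrier G \<Longrightarrow> g \<in> carrier G \<Longrightarrow> h \<in> carrier G \<Longrightarrow>
    gact_set G (g \<otimes> h) X = gact_set G h (gact_set G g X)"
  unfolding gact_set_def image_image by (rule image_cong) (use conjg_comp in auto)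

lemma gact_set_one: "X \<subseteq> carrier G \<Longrightarrow> gact_set G \<one> X = X"
  unfolding gact_set_def using conjg_one by (simp add: subset_eq)

lemma gact_set_inv_cancel: "X \<subseteq> carrier G \<Longrightarrow> g \<in> carrier G \<Longrightarrow> gact_set G g (gact_set G (inv g) X) = X"
  using gact_set_mult[of X "inv g" g] gact_set_one by simp

lemma conjg_conjg_distrib: "d \<in> carrier G \<Longrightarrow> e \<in> carrier G \<Longrightarrow> g \<in> carrier G \<Longrightarrow>
   conjg G (conjg G d e) g = conjg G (conjg G d g) (conjg G e g)"
proof -
  assume a: "d \<in> carrier G" "e \<in> carrier G" "g \<in> carrier G"
  have "conjg G (conjg G d g) (conjg G e g) = conjg G d (g \<otimes> conjg G e g)"
    using conjg_comp a conjg_closed by simp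
  also have "g \<otimes> conjg G e g = e \<otimes> g"
    using a mult_inv_cancel_left[of g "e \<otimes> g"] by (simp add: conjg_eq m_assoc)
  finally show ?thesis using conjg_comp a by simp
qed

lemma bmul_subset_D: "d \<in> D \<Longrightarrow> e \<in> D \<Longrightarrow> bmul G d e \<subseteq> D"
  unfolding bmul_def sdiff_def using conjg_in_D D_carrier by auto

lemma amul_subset_D:
  assumes X: "X \<subseteq> D" and Y: "Y \<subseteq> D"
  shows "amul G X Y \<subseteq> D"
  using X
proof (induction X rule: subset_D_induct)
  case empty
  show ?case using amul_empty_left by simp
next
  case (single d)
  show ?case using Y
  proof (induction Y rule: subset_D_induct)
    case empty
    show ?case using amul_empty_right by simp
  next
    case (single e)
    show ?case using amul_singletons bmul_subset_D \<open>d \<in> D\<close> \<open>e \<in> D\<close> by simp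
  next
    case (sdiff Y1 Y2)
    then show ?case using amul_sdiff_right finite_subset_D sdiff_subset by simp
  qed
next
  case (sdiff X1 X2)
  then show ?case using amul_sdiff_left finite_subset_D sdiff_subset Y by simp
qed

lemma bform_gact:
  assumes X: "X \<subseteq> D" and Y: "Y \<subseteq> D" and g: "g \<in> carrier G"
  shows "bform G (gact_set G g X) (gact_set G g Y) = bform G X Y"
  using X
proof (induction X rule: subset_D_induct)
  case empty
  show ?case using bform_empty_left gact_set_empty by simp
next
  case (single d)
  show ?case using Y
  proof (induction Y rule: subset_D_induct)
    case empty
    show ?case using bform_empty_right gact_set_empty by simp
  next
    case (single e)
    show ?case using bform_singletons gact_set_singleton commutes_conjg D_carrier \<open>d \<in> D\<close> \<open>e \<in> D\<close> g by simp
  next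
    case (sdiff Y1 Y2)
    have s: "Y1 \<subseteq> carrier G" "Y2 \<subseteq> carrier G" "{d} \<subseteq> carrier G" using sdiff D_subset \<open>d \<in> D\<close> by auto
    have f: "finite (gact_set G g Y1)" "finite (gact_set G g Y2)" "finite (gact_set G g {d})"
      using gact_set_subset_D finite_subset_D sdiff g \<open>d \<in> D\<close> by auto
    show ?case using sdiff gact_sdiff[OF s(1,2) g] bform_sdiff_right finite_subset_D f by simp
  qed
next
  case (sdiff X1 X2)
  have s: "X1 \<subseteq> carrier G" "X2 \<subseteq> carrier G" using sdiff D_subset by auto
  have f: "finite (gact_set G g X1)" "finite (gact_set G g X2)" "finite (gact_set G g Y)"
    using gact_set_subset_D finite_subset_D sdiff g Y by auto
  show ?case using sdiff gact_sdiff[OF s g] bform_sdiff_left finite_subset_D f Y by simp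
qed

lemma bmul_gact:
  assumes d: "d \<in> D" and e: "e \<in> D" and g: "g \<in> carrier G"
  shows "gact_set G g (bmul G d e) = bmul G (conjg G d g) (conjg G e g)"
proof (cases "commutes G d e")
  case True
  then show ?thesis using commutes_conjg D_carrier d e g gact_set_empty by (simp add: bmul_def)
next
  case False
  have nc: "\<not> commutes G (conjg G d g) (conjg G e g)" using False commutes_conjg D_carrier d e g by simp
  have cc: "conjg G d e \<in> carrier G" using conjg_closed D_carrier d e by simp
  have "gact_set G g (sdiff (sdiff {d} {e}) {conjg G d e}) =
      sdiff (sdiff (gact_set G g {d}) (gact_set G g {e})) (gact_set G g {conjg G d e})"
  proof -
    have s1: "sdiff {d} {e} \<subseteq> carrier G" using D_carrier d e by (auto simp: sdiff_def)
    have "gact_set G g (sdiff (sdiff {d} {e}) {conjg G d e}) = sdiff (gact_set G g (sdiff {d} {e})) (gact_set G g {conjg G d e})"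
      using gact_sdiff[OF s1 _ g, of "{conjg G d e}"] cc by simp
    also have "gact_set G g (sdiff {d} {e}) = sdiff (gact_set G g {d}) (gact_set G g {e})"
      using gact_sdiff[of "{d}" "{e}" g] D_carrier d e g by simp
    finally show ?thesis .
  qed
  also have "\<dots> = sdiff (sdiff {conjg G d g} {conjg G e g}) {conjg G (conjg G d g) (conjg G e g)}"
    using gact_set_singleton conjg_conjg_distrib D_carrier d e g by simp
  finally show ?thesis using False nc by (simp add: bmul_def)
qed

lemma finite_amul: "X \<subseteq> D \<Longrightarrow> Y \<subseteq> D \<Longrightarrow> finite (amul G X Y)"
  by (rule finite_subset_D[OF amul_subset_D])

lemma amul_gact_singleton_left:
  assumes d: "d \<in> D" and Y: "Y \<subseteq> D" and g: "g \<in> carrier G"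
  shows "gact_set G g (amul G {d} Y) = amul G (gact_set G g {d}) (gact_set G g Y)"
  using Y
proof (induction Y rule: subset_D_induct)
  case empty
  show ?case using amul_empty_right gact_set_empty by simp
next
  case (single e)
  show ?case using amul_singletons gact_set_singleton bmul_gact d \<open>e \<in> D\<close> g by simp
next
  case (sdiff Y1 Y2)
  have dD: "{d} \<subseteq> D" using d by simp
  have s: "Y1 \<subseteq> carrier G" "Y2 \<subseteq> carrier G" "amul G {d} Y1 \<subseteq> carrier G" "amul G {d} Y2 \<subseteq> carrier G"
    using sdiff(1,2) D_subset amul_subset_D[OF dD sdiff(1)] amul_subset_D[OF dD sdiff(2)] by auto
  have f: "finite (gact_set G g Y1)" "finite (gact_set G g Y2)" "finite (gact_set G g {d})"
    using gact_set_subset_D finite_subset_D sdiff g d by auto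
  have "gact_set G g (amul G {d} (sdiff Y1 Y2)) = gact_set G g (sdiff (amul G {d} Y1) (amul G {d} Y2))"
    using amul_sdiff_right[of "{d}" Y1 Y2] finite_subset_D[OF sdiff(1)] finite_subset_D[OF sdiff(2)] by simp
  also have "\<dots> = sdiff (gact_set G g (amul G {d} Y1)) (gact_set G g (amul G {d} Y2))"
    using gact_sdiff[OF s(3,4) g] .
  also have "\<dots> = sdiff (amul G (gact_set G g {d}) (gact_set G g Y1)) (amul G (gact_set G g {d}) (gact_set G g Y2))"
    unfolding sdiff(3) sdiff(4) ..
  also have "\<dots> = amul G (gact_set G g {d}) (sdiff (gact_set G g Y1) (gact_set G g Y2))"
    using amul_sdiff_right[OF f(3) f(1) f(2)] by (rule sym)
  also have "\<dots> = amul G (gact_set G g {d}) (gact_set G g (sdiff Y1 Y2))"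
    using gact_sdiff[OF s(1,2) g] by simp
  finally show ?case .
qed

lemma amul_gact:
  assumes X: "X \<subseteq> D" and Y: "Y \<subseteq> D" and g: "g \<in> carrier G"
  shows "gact_set G g (amul G X Y) = amul G (gact_set G g X) (gact_set G g Y)"
  using X
proof (induction X rule: subset_D_induct)
  case empty
  show ?case using amul_empty_left gact_set_empty by simp
next
  case (single d)
  show ?case using amul_gact_singleton_left[OF \<open>d \<in> D\<close> Y g] .
next
  case (sdiff X1 X2)
  have s: "X1 \<subseteq> carrier G" "X2 \<subseteq> carrier G" "amul G X1 Y \<subseteq> carrier G" "amul G X2 Y \<subseteq> carrier G"
    using sdiff(1,2) D_subset amul_subset_D[OF sdiff(1) Y] amul_subset_D[OF sdiff(2) Y] by auto
  have f: "finite (gact_set G g X1)" "finite (gact_set G g X2)" "finite (gact_set G g Y)"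
    using gact_set_subset_D finite_subset_D sdiff g Y by auto
  have "gact_set G g (amul G (sdiff X1 X2) Y) = gact_set G g (sdiff (amul G X1 Y) (amul G X2 Y))"
    using amul_sdiff_left[of X1 X2 Y] finite_subset_D[OF sdiff(1)] finite_subset_D[OF sdiff(2)] finite_subset_D[OF Y] by simp
  also have "\<dots> = sdiff (gact_set G g (amul G X1 Y)) (gact_set G g (amul G X2 Y))"
    using gact_sdiff[OF s(3,4) g] .
  also have "\<dots> = sdiff (amul G (gact_set G g X1) (gact_set G g Y)) (amul G (gact_set G g X2) (gact_set G g Y))"
    unfolding sdiff(3) sdiff(4) ..
  also have "\<dots> = amul G (sdiff (gact_set G g X1) (gact_set G g X2)) (gact_set G g Y)"
    using amul_sdiff_left[OF f(1) f(2) f(3)] by (rule sym)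
  also have "\<dots> = amul G (gact_set G g (sdiff X1 X2)) (gact_set G g Y)"
    using gact_sdiff[OF s(1,2) g] by simp
  finally show ?case .
qed

lemma bmul_comm: assumes d: "d \<in> D" and e: "e \<in> D" shows "bmul G d e = bmul G e d"
proof (cases "commutes G d e")
  case True
  then show ?thesis using commutes_sym by (simp add: bmul_def)
next
  case False
  have "conjg G d e = conjg G e d" by (rule conjg_sym[OF d e False])
  then show ?thesis using False commutes_sym[of d e] by (auto simp: bmul_def sdiff_def)
qed

lemma amul_comm:
  assumes X: "X \<subseteq> D" and Y: "Y \<subseteq> D"
  shows "amul G X Y = amul G Y X"
  using X
proof (induction X rule: subset_D_induct)
  case empty
  show ?case using amul_empty_left amul_empty_right by simp
next
  case (single d)
  show ?case using Y
  proof (induction Y rule: subset_D_induct)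
    case empty
    show ?case using amul_empty_left amul_empty_right by simp
  next
    case (single e)
    show ?case using amul_singletons bmul_comm \<open>d \<in> D\<close> \<open>e \<in> D\<close> by simp
  next
    case (sdiff Y1 Y2)
    then show ?case using amul_sdiff_left amul_sdiff_right finite_subset_D by simp
  qed
next
  case (sdiff X1 X2)
  then show ?case using amul_sdiff_left amul_sdiff_right finite_subset_D Y by simp
qed

lemma amul_singleton_left:
  assumes d: "d \<in> D" and X: "X \<subseteq> D"
  shows "amul G {d} X = sdiff (sdiff (if bform G {d} X then {d} else {}) X) (gact_set G d X)"
  using X
proof (induction X rule: subset_D_induct)
  case empty
  show ?case using amul_empty_right bform_empty_right gact_set_empty by (simp add: sdiff_def)
next
  case (single e)
  show ?case
  proof (cases "commutes G d e")
    case True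
    have "conjg G e d = e" using conjg_commuting[OF \<open>e \<in> D\<close> d] True commutes_sym by simp
    then show ?thesis using True amul_singletons bform_singletons gact_set_singleton by (simp add: bmul_def sdiff_def)
  next
    case False
    have "conjg G e d = conjg G d e" using conjg_sym[OF d \<open>e \<in> D\<close> False] by simp
    then show ?thesis using False amul_singletons bform_singletons gact_set_singleton by (simp add: bmul_def)
  qed
next
  case (sdiff X1 X2)
  have s: "X1 \<subseteq> carrier G" "X2 \<subseteq> carrier G" using sdiff D_subset by auto
  have dc: "d \<in> carrier G" using D_carrier d .
  have "amul G {d} (sdiff X1 X2) = sdiff (amul G {d} X1) (amul G {d} X2)"
    using amul_sdiff_right finite_subset_D sdiff by simp
  also have "\<dots> = sdiff (sdiff (sdiff (if bform G {d} X1 then {d} else {}) X1) (gact_set G d X1))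
                        (sdiff (sdiff (if bform G {d} X2 then {d} else {}) X2) (gact_set G d X2))"
    using sdiff by simp
  also have "\<dots> = sdiff (sdiff (if bform G {d} X1 \<noteq> bform G {d} X2 then {d} else {}) (sdiff X1 X2))
                     (sdiff (gact_set G d X1) (gact_set G d X2))"
    by (rule Set.set_eqI) (simp split: if_splits; blast)
  also have "\<dots> = sdiff (sdiff (if bform G {d} (sdiff X1 X2) then {d} else {}) (sdiff X1 X2)) (gact_set G d (sdiff X1 X2))"
    using bform_sdiff_right finite_subset_D sdiff gact_sdiff[OF s dc] by simp
  finally show ?case .
qed

lemma bform_triple_left: "bform G (sdiff (sdiff {a} {b}) {c}) {f} = (((\<not> commutes G a f) \<noteq> (\<not> commutes G b f)) \<noteq> (\<not> commutes G c f))"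
proof -
  have f: "finite (sdiff {a} {b})" by (simp add: sdiff_def)
  show ?thesis using bform_sdiff_left[OF f, of "{c}" "{f}"] bform_sdiff_left[of "{a}" "{b}" "{f}"] bform_singletons by simp
qed

lemma bform_triple_right: "bform G {f} (sdiff (sdiff {a} {b}) {c}) = (((\<not> commutes G f a) \<noteq> (\<not> commutes G f b)) \<noteq> (\<not> commutes G f c))"
proof -
  have f: "finite (sdiff {a} {b})" by (simp add: sdiff_def)
  show ?thesis using bform_sdiff_right[OF _ f, of "{f}" "{c}"] bform_sdiff_right[of "{f}" "{a}" "{b}"] bform_singletons by simp
qed

lemma bform_bmul_assoc:
  assumes d: "d \<in> D" and e: "e \<in> D" and f: "f \<in> D"
  shows "bform G (bmul G d e) {f} = bform G {d} (bmul G e f)"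
proof (cases "commutes G d e")
  case de: True
  show ?thesis
  proof (cases "commutes G e f")
    case True
    then show ?thesis using de bform_empty_left bform_empty_right by (simp add: bmul_def)
  next
    case False
    have "conjg G e f = conjg G f e" using conjg_sym[OF e f False] .
    moreover have "commutes G d (conjg G f e) = commutes G (conjg G d e) (conjg G f e)"
      using conjg_commuting[OF d e de] by simp
    moreover have "\<dots> = commutes G d f" using commutes_conjg D_carrier d e f by simp
    ultimately have "commutes G d (conjg G e f) = commutes G d f" by simp
    then show ?thesis using de False bform_empty_left bform_triple_right by (simp add: bmul_def)
  qed
next
  case de: False
  show ?thesis
  proof (cases "commutes G e f")
    case True
    have "conjg G f e = f" using conjg_commuting[OF f e] True commutes_sym by simp
    then have "commutes G (conjg G d e) f = commutes G (conjg G d e) (conjg G f e)" by simp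
    also have "\<dots> = commutes G d f" using commutes_conjg D_carrier d e f by simp
    finally show ?thesis using de True bform_empty_right bform_triple_left by (simp add: bmul_def)
  next
    case False
    have "conjg G d e = conjg G e d" using conjg_sym[OF d e de] .
    then have "commutes G (conjg G d e) f = commutes G (conjg G (conjg G e d) e) (conjg G f e)"
      using commutes_conjg D_carrier d e f conjg_closed by simp
    also have "\<dots> = commutes G d (conjg G f e)" using conjg_conjg_cancel[OF d e de] by simp
    also have "conjg G f e = conjg G e f" using conjg_sym[OF e f False] by simp
    finally show ?thesis using de False bform_triple_left bform_triple_right by (simp add: bmul_def)
  qed
qed

lemma bform_amul_assoc:
  assumes X: "X \<subseteq> D" and Y: "Y \<subseteq> D" and Z: "Z \<subseteq> D"
  shows "bform G (amul G X Y) Z = bform G X (amul G Y Z)"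
  using X
proof (induction X rule: subset_D_induct)
  case empty
  show ?case using amul_empty_left bform_empty_left by simp
next
  case (single d)
  show ?case using Y
  proof (induction Y rule: subset_D_induct)
    case empty
    show ?case using amul_empty_left amul_empty_right bform_empty_left bform_empty_right by simp
  next
    case (single e)
    show ?case using Z
    proof (induction Z rule: subset_D_induct)
      case empty
      show ?case using amul_empty_right bform_empty_right by simp
    next
      case (single f)
      show ?case using amul_singletons bform_bmul_assoc \<open>d \<in> D\<close> \<open>e \<in> D\<close> \<open>f \<in> D\<close> by simp
    next
      case (sdiff Z1 Z2)
      have f: "finite (amul G {d} {e})" using finite_amul \<open>d \<in> D\<close> \<open>e \<in> D\<close> by simp
      have f2: "finite (amul G {e} Z1)" "finite (amul G {e} Z2)" using finite_amul \<open>e \<in> D\<close> sdiff by auto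
      show ?case using sdiff bform_sdiff_right amul_sdiff_right finite_subset_D f f2 by simp
    qed
  next
    case (sdiff Y1 Y2)
    have f: "finite (amul G {d} Y1)" "finite (amul G {d} Y2)" using finite_amul \<open>d \<in> D\<close> sdiff by auto
    have f2: "finite (amul G Y1 Z)" "finite (amul G Y2 Z)" using finite_amul Z sdiff by auto
    show ?case using sdiff bform_sdiff_left bform_sdiff_right amul_sdiff_left amul_sdiff_right finite_subset_D f f2 Z by simp
  qed
next
  case (sdiff X1 X2)
  have f: "finite (amul G X1 Y)" "finite (amul G X2 Y)" "finite (amul G Y Z)" using finite_amul Y Z sdiff by auto
  show ?case using sdiff bform_sdiff_left amul_sdiff_left finite_subset_D f Y Z by simp
qed

subsection \<open>The quotient by the radical\<close>

lemma Aalg_iff: "X \<in> Aalg D \<longleftrightarrow> X \<subseteq> D"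
  unfolding Aalg_def using finite_subset_D by blast

lemma Vrad_iff: "X \<in> Vrad G D \<longleftrightarrow> X \<subseteq> D \<and> (\<forall>Y. Y \<subseteq> D \<longrightarrow> \<not> bform G X Y)"
  unfolding Vrad_def using Aalg_iff by auto

lemma Vrad_subset: "v \<in> Vrad G D \<Longrightarrow> v \<subseteq> D"
  using Vrad_iff by blast

lemma Vrad_empty: "{} \<in> Vrad G D"
  using Vrad_iff bform_empty_left by blast

lemma Vrad_sdiff: assumes v: "v \<in> Vrad G D" and w: "w \<in> Vrad G D" shows "sdiff v w \<in> Vrad G D"
proof -
  have s: "v \<subseteq> D" "w \<subseteq> D" using v w Vrad_subset by auto
  have "\<not> bform G (sdiff v w) Y" if Y: "Y \<subseteq> D" for Y
    using bform_sdiff_left[OF finite_subset_D[OF s(1)] finite_subset_D[OF s(2)] finite_subset_D[OF Y]] v w Y Vrad_iff by blast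
  then show ?thesis using Vrad_iff sdiff_subset s by blast
qed

lemma Vrad_bform_right: "v \<in> Vrad G D \<Longrightarrow> X \<subseteq> D \<Longrightarrow> \<not> bform G X v"
proof -
  assume v: "v \<in> Vrad G D" and X: "X \<subseteq> D"
  have "bform G X v = bform G v X" using bform_sym[OF X Vrad_subset[OF v]] .
  then show ?thesis using v X Vrad_iff by blast
qed

lemma Vrad_amul_left: assumes v: "v \<in> Vrad G D" and Y: "Y \<subseteq> D" shows "amul G v Y \<in> Vrad G D"
proof -
  have s: "v \<subseteq> D" using v Vrad_subset by auto
  have "\<not> bform G (amul G v Y) Z" if Z: "Z \<subseteq> D" for Z
  proof -
    have "bform G (amul G v Y) Z = bform G v (amul G Y Z)" using bform_amul_assoc[OF s Y Z] .
    moreover have "\<not> bform G v (amul G Y Z)" using v Vrad_iff amul_subset_D[OF Y Z] by blast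
    ultimately show ?thesis by simp
  qed
  then show ?thesis using Vrad_iff amul_subset_D[OF s Y] by blast
qed

lemma Vrad_amul_right: "v \<in> Vrad G D \<Longrightarrow> Y \<subseteq> D \<Longrightarrow> amul G Y v \<in> Vrad G D"
proof -
  assume v: "v \<in> Vrad G D" and Y: "Y \<subseteq> D"
  have "amul G Y v = amul G v Y" using amul_comm[OF Y Vrad_subset[OF v]] .
  then show ?thesis using Vrad_amul_left[OF v Y] by simp
qed

lemma Vrad_gact: assumes v: "v \<in> Vrad G D" and g: "g \<in> carrier G" shows "gact_set G g v \<in> Vrad G D"
proof -
  have s: "v \<subseteq> D" using v Vrad_subset by auto
  have "\<not> bform G (gact_set G g v) Z" if Z: "Z \<subseteq> D" for Z
  proof -
    have ig: "inv g \<in> carrier G" using g by simp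
    have Z': "gact_set G (inv g) Z \<subseteq> D" using gact_set_subset_D[OF Z ig] .
    have "Z = gact_set G g (gact_set G (inv g) Z)" using gact_set_inv_cancel Z D_subset g by auto
    then have "bform G (gact_set G g v) Z = bform G v (gact_set G (inv g) Z)"
      using bform_gact[OF s Z' g] by simp
    then show ?thesis using v Vrad_iff Z' by blast
  qed
  then show ?thesis using Vrad_iff gact_set_subset_D[OF s g] by blast
qed

lemma qcls_self: "X \<in> qcls G D X"
  unfolding qcls_def using Vrad_empty by (auto simp: sdiff_def intro!: exI[of _ "{}"])

lemma sdiff_assoc: "sdiff (sdiff X Y) Z = sdiff X (sdiff Y Z)"
  by (rule Set.set_eqI) auto

lemma sdiff_commute: "sdiff X Y = sdiff Y X"
  by (rule Set.set_eqI) auto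

lemma sdiff_self: "sdiff X X = {}"
  by (rule Set.set_eqI) auto

lemma sdiff_empty: "sdiff X {} = X" "sdiff {} X = X"
  by (rule Set.set_eqI, simp)+

lemma qcls_eqI:
  assumes X: "X \<subseteq> D" and Y: "Y \<subseteq> D" and XY: "sdiff X Y \<in> Vrad G D"
  shows "qcls G D X = qcls G D Y"
proof -
  have "qcls G D X \<subseteq> qcls G D Y" if XY: "sdiff X Y \<in> Vrad G D" for X Y
  proof
    fix Z assume "Z \<in> qcls G D X"
    then obtain v where v: "v \<in> Vrad G D" "Z = sdiff X v" unfolding qcls_def by blast
    have "Z = sdiff Y (sdiff (sdiff X Y) v)" using v(2) by (auto simp: sdiff_def)
    moreover have "sdiff (sdiff X Y) v \<in> Vrad G D" using Vrad_sdiff XY v(1) by blast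
    ultimately show "Z \<in> qcls G D Y" unfolding qcls_def by blast
  qed
  moreover have "sdiff Y X \<in> Vrad G D" using XY sdiff_commute by metis
  ultimately show ?thesis using XY by blast
qed

lemma qcls_eq_iff:
  assumes X: "X \<subseteq> D" and Y: "Y \<subseteq> D"
  shows "qcls G D X = qcls G D Y \<longleftrightarrow> sdiff X Y \<in> Vrad G D"
proof
  assume e: "qcls G D X = qcls G D Y"
  have "X \<in> qcls G D Y" using e qcls_self by metis
  then obtain v where v: "v \<in> Vrad G D" "X = sdiff Y v" unfolding qcls_def by blast
  have "sdiff X Y = v" using v(2) by (auto simp: sdiff_def)
  then show "sdiff X Y \<in> Vrad G D" using v(1) by simp
qed (rule qcls_eqI[OF X Y])

lemma qadd_qcls:
  assumes X: "X \<subseteq> D" and Y: "Y \<subseteq> D"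
  shows "qadd (qcls G D X) (qcls G D Y) = qcls G D (sdiff X Y)"
proof (rule Set.set_eqI)
  fix Z
  show "Z \<in> qadd (qcls G D X) (qcls G D Y) \<longleftrightarrow> Z \<in> qcls G D (sdiff X Y)"
  proof
    assume "Z \<in> qadd (qcls G D X) (qcls G D Y)"
    then obtain v w where vw: "v \<in> Vrad G D" "w \<in> Vrad G D" "Z = sdiff (sdiff X v) (sdiff Y w)"
      unfolding qadd_def qcls_def by blast
    have "Z = sdiff (sdiff X Y) (sdiff v w)" using vw(3) by (auto simp: sdiff_def)
    then show "Z \<in> qcls G D (sdiff X Y)" using Vrad_sdiff vw unfolding qcls_def by blast
  next
    assume "Z \<in> qcls G D (sdiff X Y)"
    then obtain v where v: "v \<in> Vrad G D" "Z = sdiff (sdiff X Y) v" unfolding qcls_def by blast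
    have "Z = sdiff (sdiff X v) (sdiff Y {})" using v(2) by (auto simp: sdiff_def)
    moreover have "sdiff X v \<in> qcls G D X" using v(1) unfolding qcls_def by blast
    moreover have "sdiff Y {} \<in> qcls G D Y" using Vrad_empty unfolding qcls_def by blast
    ultimately show "Z \<in> qadd (qcls G D X) (qcls G D Y)" unfolding qadd_def by blast
  qed
qed

lemma qmul_qcls:
  assumes X: "X \<subseteq> D" and Y: "Y \<subseteq> D"
  shows "qmul G D (qcls G D X) (qcls G D Y) = qcls G D (amul G X Y)"
proof (rule Set.set_eqI)
  fix Z
  show "Z \<in> qmul G D (qcls G D X) (qcls G D Y) \<longleftrightarrow> Z \<in> qcls G D (amul G X Y)"
  proof
    assume "Z \<in> qmul G D (qcls G D X) (qcls G D Y)"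
    then obtain v1 v2 v where vs: "v1 \<in> Vrad G D" "v2 \<in> Vrad G D" "v \<in> Vrad G D"
        "Z = sdiff (amul G (sdiff X v1) (sdiff Y v2)) v"
      unfolding qmul_def qcls_def by blast
    have s: "v1 \<subseteq> D" "v2 \<subseteq> D" using vs Vrad_subset by auto
    have f: "finite X" "finite Y" "finite v1" "finite v2" using finite_subset_D X Y s by auto
    have "amul G (sdiff X v1) (sdiff Y v2) =
        sdiff (sdiff (amul G X Y) (amul G X v2)) (sdiff (amul G v1 Y) (amul G v1 v2))"
    proof -
      have fy: "finite (sdiff Y v2)" using f by (simp add: sdiff_def)
      show ?thesis using amul_sdiff_left[OF f(1) f(3) fy] amul_sdiff_right[OF f(1) f(2) f(4)] amul_sdiff_right[OF f(3) f(2) f(4)] by simp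
    qed
    then have "Z = sdiff (amul G X Y) (sdiff (sdiff (amul G X v2) (sdiff (amul G v1 Y) (amul G v1 v2))) v)"
      using vs(4) by (auto simp: sdiff_def)
    moreover have "sdiff (sdiff (amul G X v2) (sdiff (amul G v1 Y) (amul G v1 v2))) v \<in> Vrad G D"
      using Vrad_sdiff[OF Vrad_sdiff[OF Vrad_amul_right[OF vs(2) X] Vrad_sdiff[OF Vrad_amul_left[OF vs(1) Y] Vrad_amul_left[OF vs(1) s(2)]]] vs(3)] .
    ultimately show "Z \<in> qcls G D (amul G X Y)" unfolding qcls_def by blast
  next
    assume "Z \<in> qcls G D (amul G X Y)"
    then obtain v where v: "v \<in> Vrad G D" "Z = sdiff (amul G X Y) v" unfolding qcls_def by blast
    then show "Z \<in> qmul G D (qcls G D X) (qcls G D Y)"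
      unfolding qmul_def using qcls_self by blast
  qed
qed

lemma gact_q_qcls:
  assumes X: "X \<subseteq> D" and g: "g \<in> carrier G"
  shows "gact_q G g (qcls G D X) = qcls G D (gact_set G g X)"
proof (rule Set.set_eqI)
  fix Z
  have Xc: "X \<subseteq> carrier G" using X D_subset by auto
  show "Z \<in> gact_q G g (qcls G D X) \<longleftrightarrow> Z \<in> qcls G D (gact_set G g X)"
  proof
    assume "Z \<in> gact_q G g (qcls G D X)"
    then obtain v where v: "v \<in> Vrad G D" "Z = gact_set G g (sdiff X v)"
      unfolding gact_q_def qcls_def by blast
    have vc: "v \<subseteq> carrier G" using Vrad_subset[OF v(1)] D_subset by auto
    have "Z = sdiff (gact_set G g X) (gact_set G g v)" using v(2) gact_sdiff[OF Xc vc g] by simp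
    then show "Z \<in> qcls G D (gact_set G g X)" using Vrad_gact[OF v(1) g] unfolding qcls_def by blast
  next
    assume "Z \<in> qcls G D (gact_set G g X)"
    then obtain w where w: "w \<in> Vrad G D" "Z = sdiff (gact_set G g X) w" unfolding qcls_def by blast
    have ig: "inv g \<in> carrier G" using g by simp
    define v where "v = gact_set G (inv g) w"
    have v: "v \<in> Vrad G D" unfolding v_def using Vrad_gact[OF w(1) ig] .
    have vc: "v \<subseteq> carrier G" using Vrad_subset[OF v] D_subset by auto
    have wc: "w \<subseteq> carrier G" using Vrad_subset[OF w(1)] D_subset by auto
    have "gact_set G g v = w" unfolding v_def using gact_set_inv_cancel[OF wc g] .
    then have "Z = gact_set G g (sdiff X v)" using w(2) gact_sdiff[OF Xc vc g] by simp
    moreover have "sdiff X v \<in> qcls G D X" using v unfolding qcls_def by blast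
    ultimately show "Z \<in> gact_q G g (qcls G D X)" unfolding gact_q_def by blast
  qed
qed

lemma qform_qcls:
  assumes X: "X \<subseteq> D" and Y: "Y \<subseteq> D"
  shows "qform G (qcls G D X) (qcls G D Y) = bform G X Y"
proof -
  define X' where "X' = (SOME Z. Z \<in> qcls G D X)"
  define Y' where "Y' = (SOME Z. Z \<in> qcls G D Y)"
  have X'm: "X' \<in> qcls G D X" unfolding X'_def using qcls_self by (rule someI)
  have Y'm: "Y' \<in> qcls G D Y" unfolding Y'_def using qcls_self by (rule someI)
  obtain v where v: "v \<in> Vrad G D" "X' = sdiff X v" using X'm unfolding qcls_def by blast
  obtain w where w: "w \<in> Vrad G D" "Y' = sdiff Y w" using Y'm unfolding qcls_def by blast
  have s: "v \<subseteq> D" "w \<subseteq> D" using v w Vrad_subset by auto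
  have f: "finite X" "finite Y" "finite v" "finite w" using finite_subset_D X Y s by auto
  have fy: "finite (sdiff Y w)" using f by (simp add: sdiff_def)
  have "bform G X' Y' = bform G (sdiff X v) (sdiff Y w)" using v w by simp
  also have "\<dots> = (bform G X (sdiff Y w) \<noteq> bform G v (sdiff Y w))" using bform_sdiff_left[OF f(1) f(3) fy] .
  also have "bform G v (sdiff Y w) = False" using v(1) Vrad_iff sdiff_subset[OF Y s(2)] by blast
  also have "bform G X (sdiff Y w) = (bform G X Y \<noteq> bform G X w)" using bform_sdiff_right[OF f(1) f(2) f(4)] .
  also have "bform G X w = False" using Vrad_bform_right[OF w(1) X] by simp
  finally have "bform G X' Y' = bform G X Y" by simp
  then show ?thesis unfolding qform_def X'_def Y'_def .
qed

lemma Abar_iff: "x \<in> Abar G D \<longleftrightarrow> (\<exists>X. X \<subseteq> D \<and> x = qcls G D X)"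
  unfolding Abar_def using Aalg_iff by blast

lemma AbarE: assumes "x \<in> Abar G D" obtains X where "X \<subseteq> D" "x = qcls G D X"
  using assms Abar_iff by blast

lemma qcls_in_Abar: "X \<subseteq> D \<Longrightarrow> qcls G D X \<in> Abar G D"
  using Abar_iff by blast

lemma finite_Abar: "finite (Abar G D)"
proof -
  have "Aalg D \<subseteq> Pow D" using Aalg_iff by blast
  then have "finite (Aalg D)" using finite_D finite_subset by blast
  then show ?thesis unfolding Abar_def by simp
qed

lemma qadd_self: "x \<in> Abar G D \<Longrightarrow> qadd x x = qzero G D"
  by (elim AbarE) (simp add: qadd_qcls sdiff_self qzero_def)

lemma qadd_closed: "x \<in> Abar G D \<Longrightarrow> y \<in> Abar G D \<Longrightarrow> qadd x y \<in> Abar G D"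
  by (elim AbarE) (simp add: qadd_qcls qcls_in_Abar sdiff_subset)

lemma qmul_closed: "x \<in> Abar G D \<Longrightarrow> y \<in> Abar G D \<Longrightarrow> qmul G D x y \<in> Abar G D"
  by (elim AbarE) (simp add: qmul_qcls qcls_in_Abar amul_subset_D)

lemma qmul_comm: "x \<in> Abar G D \<Longrightarrow> y \<in> Abar G D \<Longrightarrow> qmul G D x y = qmul G D y x"
  by (elim AbarE) (simp add: qmul_qcls amul_comm)

lemma qmul_qadd: "x \<in> Abar G D \<Longrightarrow> y \<in> Abar G D \<Longrightarrow> z \<in> Abar G D \<Longrightarrow>
   qmul G D (qadd x y) z = qadd (qmul G D x z) (qmul G D y z)"
proof (elim AbarE)
  fix X Y Z assume X: "X \<subseteq> D" and Y: "Y \<subseteq> D" and Z: "Z \<subseteq> D"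
    and e: "x = qcls G D X" "y = qcls G D Y" "z = qcls G D Z"
  have "qmul G D (qadd x y) z = qcls G D (amul G (sdiff X Y) Z)"
    using e X Y Z qadd_qcls qmul_qcls sdiff_subset by simp
  also have "amul G (sdiff X Y) Z = sdiff (amul G X Z) (amul G Y Z)"
    using amul_sdiff_left finite_subset_D X Y Z by simp
  also have "qcls G D (sdiff (amul G X Z) (amul G Y Z)) = qadd (qmul G D x z) (qmul G D y z)"
    using e X Y Z qadd_qcls qmul_qcls amul_subset_D by simp
  finally show ?thesis .
qed

lemma qform_sym: "x \<in> Abar G D \<Longrightarrow> y \<in> Abar G D \<Longrightarrow> qform G x y = qform G y x"
  by (elim AbarE) (simp add: qform_qcls bform_sym)

lemma qform_qadd: "x \<in> Abar G D \<Longrightarrow> y \<in> Abar G D \<Longrightarrow> z \<in> Abar G D \<Longrightarrow>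
   qform G (qadd x y) z = (qform G x z \<noteq> qform G y z)"
proof (elim AbarE)
  fix X Y Z assume X: "X \<subseteq> D" and Y: "Y \<subseteq> D" and Z: "Z \<subseteq> D"
    and e: "x = qcls G D X" "y = qcls G D Y" "z = qcls G D Z"
  have "qform G (qadd x y) z = bform G (sdiff X Y) Z"
    using e X Y Z qadd_qcls qform_qcls sdiff_subset by simp
  also have "\<dots> = (bform G X Z \<noteq> bform G Y Z)" using bform_sdiff_left finite_subset_D X Y Z by simp
  finally show ?thesis using e X Y Z qform_qcls by simp
qed

lemma qform_qmul_assoc: "x \<in> Abar G D \<Longrightarrow> y \<in> Abar G D \<Longrightarrow> z \<in> Abar G D \<Longrightarrow>
   qform G (qmul G D x y) z = qform G x (qmul G D y z)"
proof (elim AbarE)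
  fix X Y Z assume X: "X \<subseteq> D" and Y: "Y \<subseteq> D" and Z: "Z \<subseteq> D"
    and e: "x = qcls G D X" "y = qcls G D Y" "z = qcls G D Z"
  show ?thesis using e X Y Z qmul_qcls qform_qcls amul_subset_D bform_amul_assoc by simp
qed

lemma qform_nondegenerate: "x \<in> Abar G D \<Longrightarrow> x \<noteq> qzero G D \<Longrightarrow> \<exists>y\<in>Abar G D. qform G x y"
proof (elim AbarE)
  fix X assume X: "X \<subseteq> D" and e: "x = qcls G D X" and nz: "x \<noteq> qzero G D"
  have "X \<notin> Vrad G D"
  proof
    assume "X \<in> Vrad G D"
    moreover have "sdiff X {} = X" by (simp add: sdiff_def)
    ultimately have "qcls G D X = qcls G D {}" using qcls_eq_iff[OF X, of "{}"] by simp
    then show False using nz e by (simp add: qzero_def)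
  qed
  then obtain Y where Y: "Y \<subseteq> D" "bform G X Y" using Vrad_iff X by blast
  then show ?thesis using e X qform_qcls qcls_in_Abar by metis
qed

lemma gact_q_closed: "g \<in> carrier G \<Longrightarrow> x \<in> Abar G D \<Longrightarrow> gact_q G g x \<in> Abar G D"
  by (elim AbarE) (simp add: gact_q_qcls qcls_in_Abar gact_set_subset_D)

lemma gact_q_qadd: "g \<in> carrier G \<Longrightarrow> x \<in> Abar G D \<Longrightarrow> y \<in> Abar G D \<Longrightarrow>
    gact_q G g (qadd x y) = qadd (gact_q G g x) (gact_q G g y)"
proof (elim AbarE)
  fix X Y assume g: "g \<in> carrier G" and X: "X \<subseteq> D" and Y: "Y \<subseteq> D"
    and e: "x = qcls G D X" "y = qcls G D Y"
  have s: "X \<subseteq> carrier G" "Y \<subseteq> carrier G" using X Y D_subset by auto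
  show ?thesis using e X Y g qadd_qcls gact_q_qcls sdiff_subset gact_set_subset_D gact_sdiff[OF s g] by simp
qed

lemma gact_q_qmul: "g \<in> carrier G \<Longrightarrow> x \<in> Abar G D \<Longrightarrow> y \<in> Abar G D \<Longrightarrow>
    gact_q G g (qmul G D x y) = qmul G D (gact_q G g x) (gact_q G g y)"
proof (elim AbarE)
  fix X Y assume g: "g \<in> carrier G" and X: "X \<subseteq> D" and Y: "Y \<subseteq> D"
    and e: "x = qcls G D X" "y = qcls G D Y"
  show ?thesis using e X Y g qmul_qcls gact_q_qcls amul_subset_D gact_set_subset_D amul_gact by simp
qed

lemma qform_gact_q: "g \<in> carrier G \<Longrightarrow> x \<in> Abar G D \<Longrightarrow> y \<in> Abar G D \<Longrightarrow>
    qform G (gact_q G g x) (gact_q G g y) = qform G x y"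
proof (elim AbarE)
  fix X Y assume g: "g \<in> carrier G" and X: "X \<subseteq> D" and Y: "Y \<subseteq> D"
    and e: "x = qcls G D X" "y = qcls G D Y"
  show ?thesis using e X Y g qform_qcls gact_q_qcls gact_set_subset_D bform_gact by simp
qed

lemma gact_q_mult: "g \<in> carrier G \<Longrightarrow> h \<in> carrier G \<Longrightarrow> x \<in> Abar G D \<Longrightarrow>
    gact_q G (g \<otimes> h) x = gact_q G h (gact_q G g x)"
proof (elim AbarE)
  fix X assume g: "g \<in> carrier G" and h: "h \<in> carrier G" and X: "X \<subseteq> D" and e: "x = qcls G D X"
  have s: "X \<subseteq> carrier G" using X D_subset by auto
  show ?thesis using e X g h gact_q_qcls gact_set_subset_D gact_set_mult[OF s g h] by simp
qed

lemma gact_q_one: "x \<in> Abar G D \<Longrightarrow> gact_q G \<one> x = x"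
proof (elim AbarE)
  fix X assume X: "X \<subseteq> D" and e: "x = qcls G D X"
  have s: "X \<subseteq> carrier G" using X D_subset by auto
  show ?thesis using e X gact_q_qcls gact_set_one[OF s] by simp
qed

lemma singleton_class_in_Abar: "d \<in> D \<Longrightarrow> qcls G D {d} \<in> Abar G D"
  by (simp add: qcls_in_Abar)

lemma singleton_classes_conjugate: "d \<in> D \<Longrightarrow> e \<in> D \<Longrightarrow> \<exists>g\<in>carrier G. gact_q G g (qcls G D {d}) = qcls G D {e}"
proof -
  assume d: "d \<in> D" and e: "e \<in> D"
  obtain g where g: "g \<in> carrier G" "conjg G d g = e" using D_conjugate d e by blast
  have "gact_q G g (qcls G D {d}) = qcls G D {e}" using gact_q_qcls[of "{d}" g] d g gact_set_singleton by simp
  then show ?thesis using g by blast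
qed

lemma qmul_singleton_class_left: "d \<in> D \<Longrightarrow> x \<in> Abar G D \<Longrightarrow>
   qmul G D (qcls G D {d}) x = qadd (qadd (if qform G (qcls G D {d}) x then qcls G D {d} else qzero G D) x) (gact_q G d x)"
proof (elim AbarE)
  fix X assume d: "d \<in> D" and X: "X \<subseteq> D" and e: "x = qcls G D X"
  have dD: "{d} \<subseteq> D" using d by simp
  have dc: "d \<in> carrier G" using D_carrier d .
  have iD: "(if bform G {d} X then {d} else {}) \<subseteq> D" using d by simp
  have c1: "qcls G D (if bform G {d} X then {d} else {}) = (if qform G (qcls G D {d}) x then qcls G D {d} else qzero G D)"
    using qform_qcls[OF dD X] e by (simp add: qzero_def)
  have "qmul G D (qcls G D {d}) x = qcls G D (amul G {d} X)" using e qmul_qcls[OF dD X] by simp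
  also have "\<dots> = qcls G D (sdiff (sdiff (if bform G {d} X then {d} else {}) X) (gact_set G d X))"
    using amul_singleton_left[OF d X] by simp
  also have "\<dots> = qadd (qcls G D (sdiff (if bform G {d} X then {d} else {}) X)) (qcls G D (gact_set G d X))"
    using qadd_qcls[OF sdiff_subset[OF iD X] gact_set_subset_D[OF X dc]] by simp
  also have "qcls G D (sdiff (if bform G {d} X then {d} else {}) X) = qadd (qcls G D (if bform G {d} X then {d} else {})) x"
    using qadd_qcls[OF iD X] e by simp
  also have "qcls G D (gact_set G d X) = gact_q G d x" using gact_q_qcls[OF X dc] e by simp
  finally show ?thesis using c1 by simp
qed

lemma singleton_classes_span:
  assumes z: "qzero G D \<in> S" and cl: "\<And>x d. x \<in> S \<Longrightarrow> d \<in> D \<Longrightarrow> qadd x (qcls G D {d}) \<in> S"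
  shows "Abar G D \<subseteq> S"
proof
  fix x assume "x \<in> Abar G D"
  then obtain X where X: "X \<subseteq> D" "x = qcls G D X" by (elim AbarE)
  have "finite X" using finite_subset_D X(1) .
  then have "qcls G D X \<in> S" using X(1)
  proof (induction X rule: finite_induct)
    case empty
    then show ?case using z by (simp add: qzero_def)
  next
    case (insert a F)
    have "insert a F = sdiff F {a}" using insert.hyps(2) by (auto simp: sdiff_def)
    have FD: "F \<subseteq> D" "{a} \<subseteq> D" using insert.prems by auto
    have "qcls G D (insert a F) = qadd (qcls G D F) (qcls G D {a})"
      using qadd_qcls[OF FD] \<open>insert a F = sdiff F {a}\<close> by simp
    then show ?case using cl insert by simp
  qed
  then show "x \<in> S" using X by simp
qed

lemma qmul_nontrivial:
  assumes line: "\<exists>L \<in> fischer_lines G D. L \<notin> Vrad G D"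
  shows "\<exists>x\<in>Abar G D. \<exists>y\<in>Abar G D. qmul G D x y \<noteq> qzero G D"
proof -
  obtain L where L: "L \<in> fischer_lines G D" "L \<notin> Vrad G D" using line by blast
  then obtain d e where de: "d \<in> D" "e \<in> D" "\<not> commutes G d e" "L = {d, e, conjg G d e}"
    unfolding fischer_lines_def by blast
  have ne: "d \<noteq> e" "conjg G d e \<noteq> d" "conjg G d e \<noteq> e"
    using noncommuting_neq conjg_neq_left conjg_neq_right de by auto
  have cD: "conjg G d e \<in> D" using conjg_in_D de D_carrier by simp
  have "bmul G d e = L" using de ne by (auto simp: bmul_def sdiff_def)
  then have "qmul G D (qcls G D {d}) (qcls G D {e}) = qcls G D L"
    using qmul_qcls[of "{d}" "{e}"] de amul_singletons by simp
  moreover have LD: "L \<subseteq> D" using de cD by simp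
  moreover have "qcls G D L \<noteq> qzero G D"
  proof
    assume "qcls G D L = qzero G D"
    then have "sdiff L {} \<in> Vrad G D" using qcls_eq_iff[OF LD, of "{}"] by (simp add: qzero_def)
    moreover have "sdiff L {} = L" by (simp add: sdiff_def)
    ultimately show False using L(2) by simp
  qed
  ultimately show ?thesis using qcls_in_Abar de by (metis empty_subsetI insert_subset)
qed

lemma comm_monoid_Abar_add: "comm_monoid (Abar_add G D)"
proof (rule comm_monoidI)
  show "x \<otimes>\<^bsub>Abar_add G D\<^esub> y \<in> carrier (Abar_add G D)"
    if "x \<in> carrier (Abar_add G D)" "y \<in> carrier (Abar_add G D)" for x y
    using that qadd_closed by (simp add: Abar_add_def)
  show "\<one>\<^bsub>Abar_add G D\<^esub> \<in> carrier (Abar_add G D)"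
    using qcls_in_Abar[of "{}"] by (simp add: Abar_add_def qzero_def)
  show "x \<otimes>\<^bsub>Abar_add G D\<^esub> y \<otimes>\<^bsub>Abar_add G D\<^esub> z = x \<otimes>\<^bsub>Abar_add G D\<^esub> (y \<otimes>\<^bsub>Abar_add G D\<^esub> z)"
    if "x \<in> carrier (Abar_add G D)" "y \<in> carrier (Abar_add G D)" "z \<in> carrier (Abar_add G D)" for x y z
  proof -
    have "x \<in> Abar G D" "y \<in> Abar G D" "z \<in> Abar G D" using that by (simp_all add: Abar_add_def)
    then show ?thesis
      by (elim AbarE) (simp add: Abar_add_def qadd_qcls sdiff_subset sdiff_assoc)
  qed
  show "\<one>\<^bsub>Abar_add G D\<^esub> \<otimes>\<^bsub>Abar_add G D\<^esub> x = x" if "x \<in> carrier (Abar_add G D)" for x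
  proof -
    have "x \<in> Abar G D" using that by (simp add: Abar_add_def)
    then show ?thesis
      by (elim AbarE) (simp add: Abar_add_def qadd_qcls qzero_def sdiff_empty)
  qed
  show "x \<otimes>\<^bsub>Abar_add G D\<^esub> y = y \<otimes>\<^bsub>Abar_add G D\<^esub> x"
    if "x \<in> carrier (Abar_add G D)" "y \<in> carrier (Abar_add G D)" for x y
  proof -
    have "x \<in> Abar G D" "y \<in> Abar G D" using that by (simp_all add: Abar_add_def)
    then show ?thesis
      by (elim AbarE) (simp add: Abar_add_def qadd_qcls sdiff_commute)
  qed
qed

lemma Abar_axial_algebra:
  assumes "\<exists>L \<in> fischer_lines G D. L \<notin> Vrad G D"
  shows "axial_algebra_char2 (Abar_add G D) G (qmul G D) (qform G) (gact_q G) D (\<lambda>d. qcls G D {d})"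
proof (rule axial_algebra_char2.intro[OF comm_monoid_Abar_add is_group], unfold_locales,
    unfold Abar_add_simps)
qed (fact qadd_self finite_Abar qmul_closed qmul_comm qmul_qadd qform_sym qform_qadd qform_qmul_assoc
  qform_nondegenerate gact_q_closed gact_q_qadd gact_q_qmul qform_gact_q gact_q_mult gact_q_one D_subset
  singleton_class_in_Abar singleton_classes_conjugate qmul_singleton_class_left singleton_classes_span
  qmul_nontrivial[OF assms])+

end

theorem corollary2p6:
  fixes G :: "('a, 'b) monoid_scheme" and D :: "'a set"
  assumes "three_transp G D"
    and "finite D"
    and "\<exists>L \<in> fischer_lines G D. L \<notin> Vrad G D"
  shows "(\<forall>x \<in> Abar G D. \<exists>!f. f \<in> (\<Pi>\<^sub>E I \<in> {J. min_qideal G D J}. I)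
              \<and> finprod (Abar_add G D) f {J. min_qideal G D J} = x)
       \<and> (\<forall>I J. min_qideal G D I \<and> min_qideal G D J \<and> I \<noteq> J
              \<longrightarrow> (\<forall>x \<in> I. \<forall>y \<in> J. qmul G D x y = qzero G D))
       \<and> (\<forall>I J. min_qideal G D I \<and> min_qideal G D J
              \<longrightarrow> (\<exists>g \<in> carrier G. gact_q G g ` I = J))"
proof -
  interpret three_transposition_class G D
    using assms(1,2) unfolding three_transposition_class_def three_transposition_class_axioms_def
      three_transp_def by blast
  interpret A: axial_algebra_char2 "Abar_add G D" G "qmul G D" "qform G" "gact_q G" D "\<lambda>d. qcls G D {d}"
    using Abar_axial_algebra[OF assms(3)] .
  have "A.is_ideal = qideal G D"
    by (simp add: fun_eq_iff A.is_ideal_def qideal_def Abar_add_simps)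
  then have minimal: "min_qideal G D = A.minimal_ideal"
    by (simp add: fun_eq_iff A.minimal_ideal_def min_qideal_def Abar_add_simps)
  have minimals: "{J. min_qideal G D J} = A.minimal_ideals"
    unfolding minimal A.minimal_ideals_def ..
  show ?thesis
  proof (intro conjI allI impI ballI)
    show "\<exists>!f. f \<in> (\<Pi>\<^sub>E I \<in> {J. min_qideal G D J}. I)
        \<and> finprod (Abar_add G D) f {J. min_qideal G D J} = x" if "x \<in> Abar G D" for x
      unfolding minimals using A.minimal_ideal_decomposition that by (simp add: Abar_add_simps)
    show "qmul G D x y = qzero G D"
      if "min_qideal G D I \<and> min_qideal G D J \<and> I \<noteq> J" "x \<in> I" "y \<in> J" for I J x y
      using A.minimal_ideals_annihilate that unfolding minimal Abar_add_simps by blast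
    show "\<exists>g \<in> carrier G. gact_q G g ` I = J" if "min_qideal G D I \<and> min_qideal G D J" for I J
      using A.minimal_ideals_conjugate that unfolding minimal by blast
  qed
qed

end
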